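(* Let $f:\mathbb{S}^2\times\mathbb{R}\to\mathbb{S}^2\times\mathbb{R}$ be a geodesic-preserving bijection. Then $f$ maps horizontal geodesics to horizontal geodesics, vertical geodesics to vertical geodesics, and slant geodesics to slant geodesics.
   Context: $\mathbb{S}^2\times\mathbb{R}$ has the Riemannian product metric of the round unit sphere and the real line. A geodesic is the image of a locally isometric immersion of the whole real line; a bijection (not assumed continuous) is geodesic-preserving if it maps every geodesic onto a geodesic as a set. A geodesic is vertical if it equals $\{p\}\times\mathbb{R}$, horizontal if it is contained in some $\mathbb{S}^2\times\{r\}$ (a great circle), and slant otherwise. *)

theory Defs
  imports "HOL-Analysis.Analysis"
begin

type_synonym pt = "(real^3) \<times> real"

definition S2R :: "pt set" where
  "S2R = {(p, r). norm p = 1}"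

text \<open>Riemannian distance of the product metric: round sphere distance
  (angle arccos of the inner product) combined with the line distance.\<close>
definition dist_S2R :: "pt \<Rightarrow> pt \<Rightarrow> real" where
  "dist_S2R x y = sqrt ((arccos (fst x \<bullet> fst y))\<^sup>2 + (snd x - snd y)\<^sup>2)"

definition local_isometry_S2R :: "(real \<Rightarrow> pt) \<Rightarrow> bool" where
  "local_isometry_S2R \<gamma> \<longleftrightarrow> (\<forall>t. \<gamma> t \<in> S2R) \<and>
     (\<forall>t. \<exists>e>0. \<forall>s s'. \<bar>s - t\<bar> < e \<and> \<bar>s' - t\<bar> < e \<longrightarrow>
         dist_S2R (\<gamma> s) (\<gamma> s') = \<bar>s - s'\<bar>)"

definition geodesic_S2R :: "pt set \<Rightarrow> bool" where
  "geodesic_S2R G \<longleftrightarrow> (\<exists>\<gamma>. local_isometry_S2R \<gamma> \<and> G = range \<gamma>)"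

definition vertical_geod :: "pt set \<Rightarrow> bool" where
  "vertical_geod G \<longleftrightarrow> geodesic_S2R G \<and> (\<exists>p. norm p = 1 \<and> G = {p} \<times> UNIV)"

definition horizontal_geod :: "pt set \<Rightarrow> bool" where
  "horizontal_geod G \<longleftrightarrow> geodesic_S2R G \<and> (\<exists>r. G \<subseteq> UNIV \<times> {r})"

definition slant_geod :: "pt set \<Rightarrow> bool" where
  "slant_geod G \<longleftrightarrow> geodesic_S2R G \<and> \<not> vertical_geod G \<and> \<not> horizontal_geod G"

definition geodesic_preserving :: "(pt \<Rightarrow> pt) \<Rightarrow> bool" where
  "geodesic_preserving f \<longleftrightarrow> (\<forall>G. geodesic_S2R G \<longrightarrow> geodesic_S2R (f ` G))"

end

theory Submission
  imports Defs
begin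

text \<open>Every geodesic of S^2 x R is a horizontal great circle at one height or a helix over a great
  circle, the vertical lines being the helices of slope zero: along a unit-speed geodesic the height
  is affine and the sphere component runs along a great circle at constant speed. Two horizontal great circles through a point meet exactly
  in that point and its antipode, whereas two helices meeting at two heights also meet at a third;
  hence f maps horizontal geodesics to horizontal ones, preserves and reflects equality of heights,
  and commutes with the antipodal map. Two points of a vertical line, unlike two points in general
  position, are joined by helices over different great circles, which can be detected at a common
  level; so vertical lines go to curves inside two antipodal vertical lines, that is, to vertical
  lines. Finally a slant helix meets a companion helix over a perpendicular great circle twice
  without containing any antipode of its points, which a vertical image cannot accommodate.\<close>

section \<open>Unit vectors and great circles\<close>

definition orthonormal_pair :: "'a::real_inner \<Rightarrow> 'a \<Rightarrow> bool" where
  "orthonormal_pair U V \<longleftrightarrow> norm U = 1 \<and> norm V = 1 \<and> U \<bullet> V = 0"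

definition great_circle :: "'a::real_vector \<Rightarrow> 'a \<Rightarrow> real \<Rightarrow> 'a" where
  "great_circle U V t = cos t *\<^sub>R U + sin t *\<^sub>R V"

lemma unit_inner_bounds:
  fixes x y :: "'a::real_inner"
  assumes "norm x = 1" "norm y = 1"
  shows "-1 \<le> x \<bullet> y" "x \<bullet> y \<le> 1"
  using Cauchy_Schwarz_ineq2[of x y] assms by auto

lemma cos_arccos_unit_inner:
  fixes x y :: "'a::real_inner"
  assumes "norm x = 1" "norm y = 1"
  shows "cos (arccos (x \<bullet> y)) = x \<bullet> y"
  using unit_inner_bounds[OF assms] by simp

lemma arccos_unit_inner_nonneg:
  fixes x y :: "'a::real_inner"
  assumes "norm x = 1" "norm y = 1"
  shows "0 \<le> arccos (x \<bullet> y)"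
  using unit_inner_bounds[OF assms] by (simp add: arccos_lbound)

lemma unit_inner_eq_1_imp_eq:
  fixes x y :: "'a::real_inner"
  assumes "norm x = 1" "norm y = 1" "x \<bullet> y = 1"
  shows "x = y"
proof -
  have "(x - y) \<bullet> (x - y) = x \<bullet> x - 2 * (x \<bullet> y) + y \<bullet> y"
    by (simp add: inner_diff_left inner_diff_right inner_commute)
  also have "\<dots> = 0" using assms by (simp add: power2_norm_eq_inner[symmetric])
  finally show ?thesis by simp
qed

lemma neg_neq_unit:
  fixes x :: "'a::real_normed_vector"
  assumes "norm x = 1"
  shows "- x \<noteq> x"
  using assms by (metis norm_zero one_neq_neg_one scaleR_cancel_right scaleR_left.minus scaleR_one)

lemma unit_inner_split:
  fixes x y z :: "'a::real_inner"
  assumes "norm y = 1"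
  shows "x \<bullet> z = (x \<bullet> y) * (y \<bullet> z) + (x - (x \<bullet> y) *\<^sub>R y) \<bullet> (z - (z \<bullet> y) *\<^sub>R y)"
proof -
  have "y \<bullet> y = 1" using assms by (simp add: power2_norm_eq_inner[symmetric])
  then show ?thesis by (simp add: inner_diff_left inner_diff_right inner_commute algebra_simps)
qed

lemma norm_unit_reject:
  fixes x y :: "'a::real_inner"
  assumes "norm x = 1" "norm y = 1"
  shows "norm (x - (x \<bullet> y) *\<^sub>R y) = sqrt (1 - (x \<bullet> y)\<^sup>2)"
proof -
  have "x \<bullet> x = 1" "y \<bullet> y = 1" using assms by (simp_all add: power2_norm_eq_inner[symmetric])
  then have "(x - (x \<bullet> y) *\<^sub>R y) \<bullet> (x - (x \<bullet> y) *\<^sub>R y) = 1 - (x \<bullet> y)\<^sup>2"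
    by (simp add: inner_diff_left inner_diff_right inner_commute algebra_simps power2_eq_square)
  then show ?thesis by (simp add: norm_eq_sqrt_inner)
qed

lemma spherical_triangle_ineq:
  fixes x y z :: "'a::real_inner"
  assumes x: "norm x = 1" and y: "norm y = 1" and z: "norm z = 1"
  shows "arccos (x \<bullet> z) \<le> arccos (x \<bullet> y) + arccos (y \<bullet> z)"
proof (cases "arccos (x \<bullet> y) + arccos (y \<bullet> z) \<le> pi")
  case True
  define A where "A = arccos (x \<bullet> y)"
  define B where "B = arccos (y \<bullet> z)"
  have bxy: "-1 \<le> x \<bullet> y" "x \<bullet> y \<le> 1" and byz: "-1 \<le> y \<bullet> z" "y \<bullet> z \<le> 1"
    and bxz: "-1 \<le> x \<bullet> z" "x \<bullet> z \<le> 1"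
    using unit_inner_bounds assms by auto
  have sA: "sin A = norm (x - (x \<bullet> y) *\<^sub>R y)"
    unfolding A_def using norm_unit_reject[OF x y] bxy by (simp add: sin_arccos)
  have sB: "sin B = norm (z - (z \<bullet> y) *\<^sub>R y)"
    unfolding B_def using norm_unit_reject[OF z y] byz by (simp add: sin_arccos inner_commute)
  have "- (sin A * sin B) \<le> (x - (x \<bullet> y) *\<^sub>R y) \<bullet> (z - (z \<bullet> y) *\<^sub>R y)"
    using Cauchy_Schwarz_ineq2[of "x - (x \<bullet> y) *\<^sub>R y" "z - (z \<bullet> y) *\<^sub>R y"]
    unfolding sA sB by (auto simp: abs_le_iff)
  then have "cos (A + B) \<le> x \<bullet> z"
    using unit_inner_split[OF y, of x z] bxy byz by (simp add: A_def B_def cos_add)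
  then have "arccos (x \<bullet> z) \<le> arccos (cos (A + B))"
    using bxz by (intro arccos_le_arccos) auto
  also have "\<dots> = A + B"
    using True bxy byz by (simp add: A_def B_def arccos_cos arccos_lbound add_nonneg_nonneg)
  finally show ?thesis unfolding A_def B_def .
next
  case False
  then show ?thesis using arccos_ubound unit_inner_bounds[OF x z] by (smt (verit))
qed

lemma unit_tangent:
  fixes x y :: "'a::real_inner"
  assumes "norm x = 1" "norm y = 1" "x \<bullet> y = cos A" "sin A \<noteq> 0"
  shows "orthonormal_pair y ((1 / sin A) *\<^sub>R (x - cos A *\<^sub>R y))"
proof -
  have xx: "x \<bullet> x = 1" and yy: "y \<bullet> y = 1" using assms by (simp_all add: power2_norm_eq_inner[symmetric])
  have "((1 / sin A) *\<^sub>R (x - cos A *\<^sub>R y)) \<bullet> ((1 / sin A) *\<^sub>R (x - cos A *\<^sub>R y))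
      = (1 - (cos A)\<^sup>2) / (sin A)\<^sup>2"
    using assms(3) xx yy
    by (simp add: inner_diff_left inner_diff_right inner_commute algebra_simps power2_eq_square divide_simps)
  also have "\<dots> = 1" using assms(4) by (simp add: sin_squared_eq[symmetric])
  finally have "norm ((1 / sin A) *\<^sub>R (x - cos A *\<^sub>R y)) = 1"
    by (metis norm_eq_sqrt_inner real_sqrt_one)
  moreover have "y \<bullet> ((1 / sin A) *\<^sub>R (x - cos A *\<^sub>R y)) = 0"
    using assms(3) yy by (simp add: inner_diff_right inner_commute)
  ultimately show ?thesis using assms(2) unfolding orthonormal_pair_def by blast
qed

lemma spherical_triangle_eq_opposite_tangents:
  fixes x y z :: "'a::real_inner"
  assumes "norm x = 1" "norm y = 1" "norm z = 1"
    and "x \<bullet> y = cos A" "y \<bullet> z = cos B" "x \<bullet> z = cos (A + B)" "sin A \<noteq> 0" "sin B \<noteq> 0"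
  shows "(1 / sin A) *\<^sub>R (x - cos A *\<^sub>R y) = - ((1 / sin B) *\<^sub>R (z - cos B *\<^sub>R y))"
proof -
  define e1 where "e1 = (1 / sin A) *\<^sub>R (x - cos A *\<^sub>R y)"
  define e2 where "e2 = (1 / sin B) *\<^sub>R (z - cos B *\<^sub>R y)"
  have yy: "y \<bullet> y = 1" using assms by (simp add: power2_norm_eq_inner[symmetric])
  have e1: "e1 \<bullet> e1 = 1"
    using unit_tangent[OF assms(1,2,4,7)] unfolding e1_def orthonormal_pair_def by (metis norm_eq_1)
  have "z \<bullet> y = cos B" using assms(5) by (simp add: inner_commute)
  then have e2: "e2 \<bullet> e2 = 1"
    using unit_tangent[OF assms(3,2) _ assms(8)] unfolding e2_def orthonormal_pair_def by (metis norm_eq_1)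
  have "e1 \<bullet> e2 = (x \<bullet> z - cos A * cos B) / (sin A * sin B)"
    unfolding e1_def e2_def using assms(4,5) yy
    by (simp add: inner_diff_left inner_diff_right inner_commute algebra_simps divide_simps)
  also have "\<dots> = -1" using assms(6-8) by (simp add: cos_add divide_simps)
  finally have "(e1 + e2) \<bullet> (e1 + e2) = 0"
    using e1 e2 by (simp add: inner_add_left inner_add_right inner_commute)
  then show ?thesis unfolding e1_def e2_def by (simp add: add_eq_0_iff)
qed

lemma orthonormal_pair_inner:
  assumes "orthonormal_pair U V"
  shows "U \<bullet> U = 1" "V \<bullet> V = 1" "U \<bullet> V = 0" "V \<bullet> U = 0"
  using assms unfolding orthonormal_pair_def by (auto simp: norm_eq_1 inner_commute)

lemma orthonormal_pair_exists:
  fixes U :: "'a::euclidean_space"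
  assumes "DIM('a) \<ge> 2" "norm U = 1"
  obtains V where "orthonormal_pair U V"
proof -
  obtain y where "y \<noteq> 0" "orthogonal U y" using orthogonal_to_vector_exists[OF assms(1)] by blast
  then show ?thesis
    using that[of "y /\<^sub>R norm y"] assms(2) by (auto simp: orthonormal_pair_def orthogonal_def)
qed

lemma orthonormal_pair_extend:
  fixes U V :: "'a::euclidean_space"
  assumes "DIM('a) \<ge> 3" "orthonormal_pair U V"
  obtains W where "orthonormal_pair U W" "orthonormal_pair V W"
proof -
  have "dim {U, V} \<le> card {U, V}" by (rule dim_le_card') simp
  also have "\<dots> \<le> 2" by (cases "U = V") auto
  finally have "dim {U, V} < DIM('a)" using assms(1) by linarith
  then obtain y where y: "y \<noteq> 0" "\<And>z. z \<in> span {U, V} \<Longrightarrow> orthogonal y z"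
    using orthogonal_to_subspace_exists by blast
  have "orthogonal U y" "orthogonal V y"
    using y(2)[OF span_base] orthogonal_commute by blast+
  then have "U \<bullet> (y /\<^sub>R norm y) = 0" "V \<bullet> (y /\<^sub>R norm y) = 0"
    by (simp_all add: orthogonal_def)
  moreover have "norm (y /\<^sub>R norm y) = 1" using y(1) by simp
  ultimately show ?thesis
    using that[of "y /\<^sub>R norm y"] assms(2) unfolding orthonormal_pair_def by blast
qed

lemma great_circle_0 [simp]: "great_circle U V 0 = U"
  and great_circle_pi_half [simp]: "great_circle U V (pi / 2) = V"
  and great_circle_2pi [simp]: "great_circle U V (2 * pi) = U"
  unfolding great_circle_def by simp_all

lemma great_circle_add_pi: "great_circle U V (t + pi) = - great_circle U V t"
  unfolding great_circle_def by (simp add: cos_add sin_add)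

lemma great_circle_great_circle:
  "great_circle (great_circle U V x) (great_circle U V (x + pi / 2)) y = great_circle U V (x + y)"
  unfolding great_circle_def
  by (simp add: cos_add sin_add algebra_simps scaleR_add_right scaleR_diff_right)

lemma great_circle_inner_great_circle:
  assumes "orthonormal_pair U V"
  shows "great_circle U V s \<bullet> great_circle U V t = cos (s - t)"
  using orthonormal_pair_inner[OF assms] unfolding great_circle_def
  by (simp add: inner_add_left inner_add_right cos_diff)

lemma norm_great_circle:
  assumes "orthonormal_pair U V"
  shows "norm (great_circle U V t) = 1"
  using great_circle_inner_great_circle[OF assms, of t t] by (simp add: norm_eq_1)

lemma great_circle_inner:
  assumes "orthonormal_pair U V"
  shows "great_circle U V t \<bullet> U = cos t" "great_circle U V t \<bullet> V = sin t"
  using orthonormal_pair_inner[OF assms] unfolding great_circle_def by (simp_all add: inner_add_left)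

lemma great_circle_inner_orthogonal:
  assumes "U \<bullet> W = 0" "V \<bullet> W = 0"
  shows "great_circle U V t \<bullet> W = 0"
  using assms unfolding great_circle_def by (simp add: inner_add_left)

lemma orthonormal_not_on_great_circle:
  assumes "orthonormal_pair U W" "orthonormal_pair V W"
  shows "W \<notin> range (great_circle U V)"
proof
  assume "W \<in> range (great_circle U V)"
  then obtain t where "W = great_circle U V t" by blast
  moreover have "great_circle U V t \<bullet> W = 0"
    using orthonormal_pair_inner[OF assms(1)] orthonormal_pair_inner[OF assms(2)]
    by (simp add: great_circle_inner_orthogonal)
  ultimately show False using orthonormal_pair_inner(2)[OF assms(1)] by simp
qed

lemma orthonormal_pair_great_circle:
  assumes "orthonormal_pair U V"
  shows "orthonormal_pair (great_circle U V x) (great_circle U V (x + pi / 2))"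
  using norm_great_circle[OF assms] great_circle_inner_great_circle[OF assms]
  unfolding orthonormal_pair_def by simp

lemma arccos_cos_abs: "\<bar>x\<bar> \<le> pi \<Longrightarrow> arccos (cos x) = \<bar>x\<bar>"
  by (cases "x \<ge> 0") (auto simp: arccos_cos arccos_cos2)

lemma arccos_great_circle_inner:
  assumes "orthonormal_pair U V" "\<bar>s - t\<bar> \<le> pi"
  shows "arccos (great_circle U V s \<bullet> great_circle U V t) = \<bar>s - t\<bar>"
  using assms by (simp add: great_circle_inner_great_circle arccos_cos_abs)

lemma great_circle_chebyshev:
  "great_circle U V t + great_circle U V (t + 2 * d) = (2 * cos d) *\<^sub>R great_circle U V (t + d)"
proof -
  have c: "cos t + cos (t + 2 * d) = 2 * cos d * cos (t + d)"
    using cos_add[of "t + d" d] cos_diff[of "t + d" d] by (simp add: algebra_simps)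
  have s: "sin t + sin (t + 2 * d) = 2 * cos d * sin (t + d)"
    using sin_add[of "t + d" d] sin_diff[of "t + d" d] by (simp add: algebra_simps)
  have "great_circle U V t + great_circle U V (t + 2 * d)
      = (cos t + cos (t + 2 * d)) *\<^sub>R U + (sin t + sin (t + 2 * d)) *\<^sub>R V"
    unfolding great_circle_def by (simp add: scaleR_add_left)
  also have "\<dots> = (2 * cos d) *\<^sub>R great_circle U V (t + d)"
    unfolding c s great_circle_def by (simp add: scaleR_add_right)
  finally show ?thesis .
qed

lemma great_circle_reflect:
  assumes "orthonormal_pair U V"
  shows "great_circle U V (k * (2 * z2 - z1) + p)
    = (2 * (great_circle U V (k * z1 + p) \<bullet> great_circle U V (k * z2 + p)))
        *\<^sub>R great_circle U V (k * z2 + p) - great_circle U V (k * z1 + p)"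
proof -
  have "great_circle U V (k * z1 + p) \<bullet> great_circle U V (k * z2 + p) = cos (k * (z2 - z1))"
    using great_circle_inner_great_circle[OF assms] cos_minus[of "k * (z2 - z1)"]
    by (simp add: algebra_simps)
  moreover have "k * (2 * z2 - z1) + p = (k * z1 + p) + 2 * (k * (z2 - z1))"
    "k * z2 + p = (k * z1 + p) + k * (z2 - z1)"
    by (simp_all add: algebra_simps)
  ultimately show ?thesis
    using great_circle_chebyshev[of U V "k * z1 + p" "k * (z2 - z1)"] by (simp add: algebra_simps)
qed

lemma great_circle_sin_combination:
  "sin (t2 - t1) *\<^sub>R great_circle U V t
     = sin (t2 - t) *\<^sub>R great_circle U V t1 + sin (t - t1) *\<^sub>R great_circle U V t2"
proof -
  have "sin (t2 - t) * cos t1 + sin (t - t1) * cos t2 = sin (t2 - t1) * cos t"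
    "sin (t2 - t) * sin t1 + sin (t - t1) * sin t2 = sin (t2 - t1) * sin t"
    by (simp_all add: sin_diff algebra_simps)
  then show ?thesis
    unfolding great_circle_def by (simp add: algebra_simps flip: scaleR_add_left)
qed

lemma unit_combination_on_great_circle:
  assumes "orthonormal_pair U V" "norm (a *\<^sub>R U + b *\<^sub>R V) = 1"
  shows "\<exists>t. a *\<^sub>R U + b *\<^sub>R V = great_circle U V t"
proof -
  have "(a *\<^sub>R U + b *\<^sub>R V) \<bullet> (a *\<^sub>R U + b *\<^sub>R V) = a\<^sup>2 + b\<^sup>2"
    using orthonormal_pair_inner[OF assms(1)]
    by (simp add: inner_add_left inner_add_right power2_eq_square)
  then have "a\<^sup>2 + b\<^sup>2 = 1" using assms(2) by (simp add: norm_eq_1)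
  then obtain t where "a = cos t" "b = sin t" using sincos_total_2pi by metis
  then show ?thesis unfolding great_circle_def by blast
qed

lemma great_circle_through:
  fixes p q :: "real^3"
  assumes p: "norm p = 1" and q: "norm q = 1"
  obtains V where "orthonormal_pair p V" "q \<in> range (great_circle p V)"
proof -
  define w where "w = q - (q \<bullet> p) *\<^sub>R p"
  obtain V0 where V0: "orthonormal_pair p V0" using orthonormal_pair_exists[OF _ p] by auto
  define V where "V = (if w = 0 then V0 else w /\<^sub>R norm w)"
  have "p \<bullet> p = 1" using p by (simp add: norm_eq_1)
  then have "p \<bullet> w = 0" unfolding w_def by (simp add: inner_diff_right inner_commute)
  then have V: "orthonormal_pair p V"
    using V0 p unfolding V_def orthonormal_pair_def by auto
  have "q = (q \<bullet> p) *\<^sub>R p + norm w *\<^sub>R V" unfolding V_def w_def by auto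
  then have "q \<in> range (great_circle p V)"
    using unit_combination_on_great_circle[OF V] q by (metis rangeI)
  with V show ?thesis using that by blast
qed

lemma great_circle_sin_diff_neq_0:
  assumes "great_circle U V t2 \<noteq> great_circle U V t1" "great_circle U V t2 \<noteq> - great_circle U V t1"
  shows "sin (t2 - t1) \<noteq> 0"
proof
  assume sin0: "sin (t2 - t1) = 0"
  then have "cos (t2 - t1) = 1 \<or> cos (t2 - t1) = -1"
    using sin_cos_squared_add[of "t2 - t1"] by (simp add: power2_eq_1_iff)
  moreover have "great_circle U V t2 = cos (t2 - t1) *\<^sub>R great_circle U V t1"
    using great_circle_great_circle[of U V t1 "t2 - t1"] sin0
    by (simp add: great_circle_def[of "great_circle U V t1"])
  ultimately show False using assms by auto
qed

lemma great_circle_range_subset: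
  assumes o1: "orthonormal_pair U1 V1" and o2: "orthonormal_pair U2 V2"
    and "b \<in> range (great_circle U1 V1)" "c \<in> range (great_circle U1 V1)"
    and "b \<in> range (great_circle U2 V2)" "c \<in> range (great_circle U2 V2)"
    and "c \<noteq> b" "c \<noteq> - b"
  shows "range (great_circle U1 V1) \<subseteq> range (great_circle U2 V2)"
proof
  obtain t1 t2 s1 s2 where b: "b = great_circle U1 V1 t1" "b = great_circle U2 V2 s1"
    and c: "c = great_circle U1 V1 t2" "c = great_circle U2 V2 s2"
    using assms(3-6) by blast
  define S where "S = sin (t2 - t1)"
  have "S \<noteq> 0" using great_circle_sin_diff_neq_0 assms(7,8) unfolding S_def b(1) c(1) by blast
  fix x assume "x \<in> range (great_circle U1 V1)"
  then obtain t where x: "x = great_circle U1 V1 t" by blast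
  define \<alpha> where "\<alpha> = sin (t2 - t) / S"
  define \<beta> where "\<beta> = sin (t - t1) / S"
  have "S *\<^sub>R x = sin (t2 - t) *\<^sub>R b + sin (t - t1) *\<^sub>R c"
    unfolding x b(1) c(1) S_def by (rule great_circle_sin_combination)
  then have "x = (1 / S) *\<^sub>R (sin (t2 - t) *\<^sub>R b + sin (t - t1) *\<^sub>R c)"
    using \<open>S \<noteq> 0\<close> by (metis divide_self_if eq_vector_fraction_iff scaleR_scaleR)
  also have "\<dots> = \<alpha> *\<^sub>R b + \<beta> *\<^sub>R c"
    unfolding \<alpha>_def \<beta>_def by (simp add: scaleR_add_right)
  also have "\<dots> = (\<alpha> * cos s1 + \<beta> * cos s2) *\<^sub>R U2 + (\<alpha> * sin s1 + \<beta> * sin s2) *\<^sub>R V2"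
    unfolding b(2) c(2) great_circle_def by (simp add: algebra_simps)
  finally have "x = (\<alpha> * cos s1 + \<beta> * cos s2) *\<^sub>R U2 + (\<alpha> * sin s1 + \<beta> * sin s2) *\<^sub>R V2" .
  moreover have "norm x = 1" using norm_great_circle[OF o1] x by simp
  ultimately show "x \<in> range (great_circle U2 V2)"
    using unit_combination_on_great_circle[OF o2] by (metis rangeI)
qed

lemma great_circle_range_eqI:
  assumes "orthonormal_pair U1 V1" "orthonormal_pair U2 V2"
    and "b \<in> range (great_circle U1 V1)" "c \<in> range (great_circle U1 V1)"
    and "b \<in> range (great_circle U2 V2)" "c \<in> range (great_circle U2 V2)"
    and "c \<noteq> b" "c \<noteq> - b"
  shows "range (great_circle U1 V1) = range (great_circle U2 V2)"
  using great_circle_range_subset[OF assms(1,2,3-8)] great_circle_range_subset[OF assms(2,1,5,6,3,4,7,8)]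
  by blast

section \<open>Local-to-global principles on the real line\<close>

lemma locally_constant_imp_constant:
  fixes F :: "real \<Rightarrow> 'a"
  assumes "\<And>t. \<exists>e>0. \<forall>s. \<bar>s - t\<bar> < e \<longrightarrow> F s = F t"
  shows "F a = F b"
proof (rule connected_local_const[of UNIV a b F])
  show "\<forall>t\<in>UNIV. \<forall>\<^sub>F s in at t within UNIV. F t = F s"
  proof
    fix t :: real
    obtain e where "e > 0" "\<forall>s. \<bar>s - t\<bar> < e \<longrightarrow> F s = F t" using assms by blast
    then show "\<forall>\<^sub>F s in at t within UNIV. F t = F s"
      unfolding eventually_at by (metis dist_real_def)
  qed
qed auto

lemma locally_affine_imp_affine:
  fixes h :: "real \<Rightarrow> real"
  assumes "\<And>t. \<exists>B e. e > 0 \<and> (\<forall>d. \<bar>d\<bar> < e \<longrightarrow> h (t + d) = h t + B * d)"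
  shows "\<exists>B c. \<forall>t. h t = B * t + c"
proof -
  have deriv_near: "\<exists>e>0. \<forall>s. \<bar>s - t\<bar> < e \<longrightarrow> (h has_real_derivative B) (at s)"
    if "e > 0" "\<forall>d. \<bar>d\<bar> < e \<longrightarrow> h (t + d) = h t + B * d" for t B e
  proof (intro exI[of _ e] conjI allI impI)
    fix s assume s: "\<bar>s - t\<bar> < e"
    show "(h has_real_derivative B) (at s)"
    proof (rule has_field_derivative_transform_within_open[of "\<lambda>x. h t + B * (x - t)" _ _ "ball t e"])
      show "((\<lambda>x. h t + B * (x - t)) has_real_derivative B) (at s)"
        by (auto intro!: derivative_eq_intros)
      show "h t + B * (x - t) = h x" if "x \<in> ball t e" for x
        using that \<open>\<forall>d. _\<close>[rule_format, of "x - t"] by (simp add: dist_real_def abs_minus_commute)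
    qed (use s in \<open>auto simp: dist_real_def abs_minus_commute\<close>)
  qed (use that in auto)
  have deriv: "(h has_real_derivative deriv h t) (at t)" for t
    using assms[of t] deriv_near by (metis DERIV_imp_deriv abs_zero diff_self)
  have "deriv h t = deriv h 0" for t
  proof (rule locally_constant_imp_constant[of "deriv h"])
    fix u
    obtain B e where "e > 0" "\<forall>s. \<bar>s - u\<bar> < e \<longrightarrow> (h has_real_derivative B) (at s)"
      using assms[of u] deriv_near by metis
    then show "\<exists>e>0. \<forall>s. \<bar>s - u\<bar> < e \<longrightarrow> deriv h s = deriv h u"
      by (metis DERIV_imp_deriv abs_zero diff_self)
  qed
  then have "((\<lambda>t. h t - deriv h 0 * t) has_real_derivative 0) (at t)" for t
    using deriv[of t] by (auto intro!: derivative_eq_intros)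
  then have "h t - deriv h 0 * t = h 0 - deriv h 0 * 0" for t
    by (rule DERIV_isconst_all[rule_format])
  then show ?thesis by (metis add.commute diff_eq_eq mult_zero_right diff_zero)
qed

definition locally_great_circle_at :: "real \<Rightarrow> (real \<Rightarrow> 'a::real_inner) \<Rightarrow> real \<Rightarrow> 'a \<Rightarrow> bool" where
  "locally_great_circle_at a \<sigma> t E \<longleftrightarrow> orthonormal_pair (\<sigma> t) E \<and>
     (\<exists>e>0. \<forall>d. \<bar>d\<bar> < e \<longrightarrow> \<sigma> (t + d) = great_circle (\<sigma> t) E (a * d))"

lemma locally_great_circle_at_unique:
  assumes "a \<noteq> 0" "locally_great_circle_at a \<sigma> t E" "locally_great_circle_at a \<sigma> t E'"
  shows "E = E'"
proof -
  obtain e e' where "e > 0" "e' > 0"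
    and E: "\<forall>d. \<bar>d\<bar> < e \<longrightarrow> \<sigma> (t + d) = great_circle (\<sigma> t) E (a * d)"
    and E': "\<forall>d. \<bar>d\<bar> < e' \<longrightarrow> \<sigma> (t + d) = great_circle (\<sigma> t) E' (a * d)"
    using assms(2,3) unfolding locally_great_circle_at_def by blast
  define d where "d = min (min e e') (1 / \<bar>a\<bar>) / 2"
  have d: "0 < d" "d < e" "d < e'" "\<bar>a\<bar> * d < pi"
  proof -
    have "\<bar>a\<bar> * d \<le> \<bar>a\<bar> * (1 / \<bar>a\<bar> / 2)"
      using assms(1) by (intro mult_left_mono) (auto simp: d_def)
    then show "\<bar>a\<bar> * d < pi" using assms(1) pi_gt3 by simp
  qed (use assms(1) \<open>e > 0\<close> \<open>e' > 0\<close> in \<open>auto simp: d_def\<close>)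
  have "sin (\<bar>a\<bar> * d) > 0" using d assms(1) by (intro sin_gt_zero) auto
  then have "sin (a * d) \<noteq> 0" by (cases "a \<ge> 0") auto
  moreover have "great_circle (\<sigma> t) E (a * d) = great_circle (\<sigma> t) E' (a * d)"
    using E[rule_format, of d] E'[rule_format, of d] d by simp
  then have "sin (a * d) *\<^sub>R E = sin (a * d) *\<^sub>R E'" unfolding great_circle_def by simp
  ultimately show ?thesis by simp
qed

lemma locally_great_circle_at_shift:
  assumes "locally_great_circle_at a \<sigma> t E"
  shows "\<exists>e>0. \<forall>s. \<bar>s - t\<bar> < e \<longrightarrow> \<sigma> s = great_circle (\<sigma> t) E (a * (s - t)) \<and>
    locally_great_circle_at a \<sigma> s (great_circle (\<sigma> t) E (a * (s - t) + pi / 2))"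
proof -
  obtain e where e: "e > 0" "\<forall>d. \<bar>d\<bar> < e \<longrightarrow> \<sigma> (t + d) = great_circle (\<sigma> t) E (a * d)"
    and o: "orthonormal_pair (\<sigma> t) E"
    using assms unfolding locally_great_circle_at_def by blast
  have "\<sigma> s = great_circle (\<sigma> t) E (a * (s - t)) \<and>
      locally_great_circle_at a \<sigma> s (great_circle (\<sigma> t) E (a * (s - t) + pi / 2))"
    if s: "\<bar>s - t\<bar> < e / 2" for s
  proof
    have "\<bar>s - t\<bar> < e" using s e(1) by linarith
    then have "\<sigma> (t + (s - t)) = great_circle (\<sigma> t) E (a * (s - t))" using e(2) by blast
    then show \<sigma>s: "\<sigma> s = great_circle (\<sigma> t) E (a * (s - t))" by simp
    show "locally_great_circle_at a \<sigma> s (great_circle (\<sigma> t) E (a * (s - t) + pi / 2))"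
      unfolding locally_great_circle_at_def
    proof (intro conjI exI[of _ "e / 2"] allI impI)
      show "orthonormal_pair (\<sigma> s) (great_circle (\<sigma> t) E (a * (s - t) + pi / 2))"
        unfolding \<sigma>s by (rule orthonormal_pair_great_circle[OF o])
      fix d assume "\<bar>d\<bar> < e / 2"
      then have "\<bar>s - t + d\<bar> < e" using s by linarith
      then have "\<sigma> (t + (s - t + d)) = great_circle (\<sigma> t) E (a * (s - t + d))" using e(2) by blast
      then have "\<sigma> (s + d) = great_circle (\<sigma> t) E (a * (s - t) + a * d)" by (simp add: distrib_left)
      then show "\<sigma> (s + d) = great_circle (\<sigma> s) (great_circle (\<sigma> t) E (a * (s - t) + pi / 2)) (a * d)"
        unfolding \<sigma>s great_circle_great_circle .
    qed (use e in simp)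
  qed
  moreover have "e / 2 > 0" using e(1) by simp
  ultimately show ?thesis by blast
qed

text \<open>The frame of \<open>\<sigma> t\<close> and its direction, rotated back by the angle \<open>a t\<close>, is locally
  constant, hence constant.\<close>
lemma locally_great_circle_imp_great_circle:
  fixes \<sigma> :: "real \<Rightarrow> 'a::real_inner"
  assumes a: "a \<noteq> 0" and loc: "\<And>t. \<exists>E. locally_great_circle_at a \<sigma> t E"
  shows "\<exists>U V. orthonormal_pair U V \<and> (\<forall>t. \<sigma> t = great_circle U V (a * t))"
proof -
  define Ef where "Ef t = (SOME E. locally_great_circle_at a \<sigma> t E)" for t
  have Ef: "locally_great_circle_at a \<sigma> t (Ef t)" for t
    unfolding Ef_def by (rule someI_ex) (rule loc)
  define \<Phi> where "\<Phi> t = (great_circle (\<sigma> t) (Ef t) (- (a * t)),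
    great_circle (\<sigma> t) (Ef t) (- (a * t) + pi / 2))" for t
  have \<Phi>_const: "\<Phi> t = \<Phi> 0" for t
  proof (rule locally_constant_imp_constant[of \<Phi>])
    fix u
    obtain e where "e > 0" and near: "\<forall>s. \<bar>s - u\<bar> < e \<longrightarrow>
        \<sigma> s = great_circle (\<sigma> u) (Ef u) (a * (s - u)) \<and>
        locally_great_circle_at a \<sigma> s (great_circle (\<sigma> u) (Ef u) (a * (s - u) + pi / 2))"
      using locally_great_circle_at_shift[OF Ef[of u]] by blast
    have "\<Phi> s = \<Phi> u" if "\<bar>s - u\<bar> < e" for s
    proof -
      have "locally_great_circle_at a \<sigma> s (great_circle (\<sigma> u) (Ef u) (a * (s - u) + pi / 2))"
        using near[rule_format, OF that] by blast
      then have "Ef s = great_circle (\<sigma> u) (Ef u) (a * (s - u) + pi / 2)"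
        by (rule locally_great_circle_at_unique[OF a Ef])
      moreover have "a * (s - u) + - (a * s) = - (a * u)"
        "a * (s - u) + (- (a * s) + pi / 2) = - (a * u) + pi / 2"
        by (simp_all add: algebra_simps)
      ultimately show ?thesis
        using near[rule_format, OF that] unfolding \<Phi>_def by (simp only: great_circle_great_circle)
    qed
    then show "\<exists>e>0. \<forall>s. \<bar>s - u\<bar> < e \<longrightarrow> \<Phi> s = \<Phi> u" using \<open>e > 0\<close> by blast
  qed
  have "\<sigma> t = great_circle (\<sigma> 0) (Ef 0) (a * t)" for t
  proof -
    have "\<sigma> 0 = great_circle (\<sigma> t) (Ef t) (- (a * t))"
      "Ef 0 = great_circle (\<sigma> t) (Ef t) (- (a * t) + pi / 2)"
      using \<Phi>_const[of t] unfolding \<Phi>_def by simp_all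
    then show ?thesis by (simp only: great_circle_great_circle) simp
  qed
  moreover have "orthonormal_pair (\<sigma> 0) (Ef 0)" using Ef unfolding locally_great_circle_at_def by blast
  ultimately show ?thesis by blast
qed

text \<open>The unit tangents at \<open>\<sigma> t\<close> towards \<open>\<sigma> (t + d)\<close> and towards \<open>\<sigma> (t - d')\<close> are opposite for
  all small \<open>d, d' > 0\<close>, so all of them are one and the same vector.\<close>
lemma inner_cos_imp_locally_great_circle_at:
  fixes \<sigma> :: "real \<Rightarrow> 'a::real_inner"
  assumes unit: "\<And>s. norm (\<sigma> s) = 1" and a: "a > 0" and e: "e > 0" "a * e \<le> 1"
    and ip: "\<And>d d'. \<bar>d\<bar> < e \<Longrightarrow> \<bar>d'\<bar> < e \<Longrightarrow> \<sigma> (t + d) \<bullet> \<sigma> (t + d') = cos (a * (d - d'))"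
  shows "\<exists>E. locally_great_circle_at a \<sigma> t E"
proof -
  have sin_pos: "sin (a * d) > 0" if "0 < d" "d < e" for d
  proof (rule sin_gt_zero)
    have "a * d \<le> a * e" using a that by simp
    then show "a * d < pi" using e pi_gt3 by linarith
  qed (use a that in simp)
  define T where "T d = (1 / sin (a * d)) *\<^sub>R (\<sigma> (t + d) - cos (a * d) *\<^sub>R \<sigma> t)" for d
  have opposite: "(1 / sin (a * d')) *\<^sub>R (\<sigma> (t - d') - cos (a * d') *\<^sub>R \<sigma> t) = - T d"
    if d: "0 < d" "d < e" "0 < d'" "d' < e" for d d'
    unfolding T_def
  proof (rule spherical_triangle_eq_opposite_tangents[OF unit unit unit])
    show "\<sigma> (t - d') \<bullet> \<sigma> t = cos (a * d')" "\<sigma> t \<bullet> \<sigma> (t + d) = cos (a * d)"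
      "\<sigma> (t - d') \<bullet> \<sigma> (t + d) = cos (a * d' + a * d)"
      using ip[of "- d'" 0] ip[of 0 d] ip[of d "- d'"] inner_commute[of "\<sigma> (t - d')"] d
      by (simp_all add: algebra_simps)
  qed (use sin_pos[of d] sin_pos[of d'] d in auto)
  define E where "E = T (e / 2)"
  have "\<sigma> (t + d) = great_circle (\<sigma> t) E (a * d)" if "\<bar>d\<bar> < e" for d
  proof -
    consider "d > 0" | "d = 0" | "d < 0" by linarith
    then show ?thesis
    proof cases
      case 1
      then have "T d = E" using opposite[of d "e / 2"] opposite[of "e / 2" "e / 2"] that e
        by (simp add: E_def)
      then have "sin (a * d) *\<^sub>R E = \<sigma> (t + d) - cos (a * d) *\<^sub>R \<sigma> t"
        using sin_pos[of d] 1 that by (auto simp: T_def)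
      then show ?thesis by (simp add: great_circle_def algebra_simps)
    next
      case 3
      then have "(1 / sin (a * - d)) *\<^sub>R (\<sigma> (t + d) - cos (a * - d) *\<^sub>R \<sigma> t) = - E"
        using opposite[of "e / 2" "- d"] that e by (simp add: E_def)
      then have "sin (a * - d) *\<^sub>R - E = \<sigma> (t + d) - cos (a * - d) *\<^sub>R \<sigma> t"
        using sin_pos[of "- d"] 3 that by auto
      then show ?thesis by (simp add: great_circle_def algebra_simps)
    qed simp
  qed
  moreover have "orthonormal_pair (\<sigma> t) E"
    unfolding E_def T_def
    by (rule unit_tangent[OF unit unit]) (use ip[of "e / 2" 0] sin_pos[of "e / 2"] e in auto)
  ultimately show ?thesis using e(1) unfolding locally_great_circle_at_def by blast
qed

lemma arc_length_locally_great_circle_at: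
  fixes \<sigma> :: "real \<Rightarrow> 'a::real_inner"
  assumes unit: "\<And>s. norm (\<sigma> s) = 1" and a: "a > 0"
    and arc: "\<exists>e>0. \<forall>s s'. \<bar>s - t\<bar> < e \<and> \<bar>s' - t\<bar> < e \<longrightarrow> arccos (\<sigma> s \<bullet> \<sigma> s') = a * \<bar>s - s'\<bar>"
  shows "\<exists>E. locally_great_circle_at a \<sigma> t E"
proof -
  obtain e0 where "e0 > 0" and arc0: "\<And>s s'. \<bar>s - t\<bar> < e0 \<Longrightarrow> \<bar>s' - t\<bar> < e0 \<Longrightarrow>
      arccos (\<sigma> s \<bullet> \<sigma> s') = a * \<bar>s - s'\<bar>"
    using arc by blast
  define e where "e = min e0 (1 / a)"
  have e: "e > 0" "a * e \<le> 1"
    using \<open>e0 > 0\<close> a by (auto simp: e_def min_def field_simps)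
  show ?thesis
  proof (rule inner_cos_imp_locally_great_circle_at[OF unit a e])
    fix d d' :: real assume "\<bar>d\<bar> < e" "\<bar>d'\<bar> < e"
    then have "arccos (\<sigma> (t + d) \<bullet> \<sigma> (t + d')) = \<bar>a * (d - d')\<bar>"
      using arc0[of "t + d" "t + d'"] a by (simp add: e_def abs_mult)
    then show "\<sigma> (t + d) \<bullet> \<sigma> (t + d') = cos (a * (d - d'))"
      using cos_arccos_unit_inner[OF unit unit] by (metis cos_abs_real)
  qed
qed

lemma zero_arc_length_imp_constant:
  fixes \<sigma> :: "real \<Rightarrow> 'a::real_inner"
  assumes unit: "\<And>s. norm (\<sigma> s) = 1"
    and arc: "\<And>t. \<exists>e>0. \<forall>s s'. \<bar>s - t\<bar> < e \<and> \<bar>s' - t\<bar> < e \<longrightarrow> arccos (\<sigma> s \<bullet> \<sigma> s') = 0"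
  shows "\<sigma> t = \<sigma> 0"
proof (rule locally_constant_imp_constant[of \<sigma>])
  fix u
  obtain e where "e > 0" and arc0: "\<forall>s s'. \<bar>s - u\<bar> < e \<and> \<bar>s' - u\<bar> < e \<longrightarrow> arccos (\<sigma> s \<bullet> \<sigma> s') = 0"
    using arc[of u] by blast
  have "\<sigma> s = \<sigma> u" if "\<bar>s - u\<bar> < e" for s
  proof (rule unit_inner_eq_1_imp_eq[OF unit unit])
    have "arccos (\<sigma> s \<bullet> \<sigma> u) = 0" using arc0 that \<open>e > 0\<close> by simp
    then show "\<sigma> s \<bullet> \<sigma> u = 1" using cos_arccos_unit_inner[OF unit unit, of s u] by simp
  qed
  with \<open>e > 0\<close> show "\<exists>e>0. \<forall>s. \<bar>s - u\<bar> < e \<longrightarrow> \<sigma> s = \<sigma> u" by blast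
qed

section \<open>Classification of geodesics\<close>

lemma local_isometry_unit:
  assumes "local_isometry_S2R \<gamma>"
  shows "norm (fst (\<gamma> t)) = 1"
  using assms unfolding local_isometry_S2R_def S2R_def by (auto simp: case_prod_beta)

lemma local_isometry_pythagoras:
  assumes "local_isometry_S2R \<gamma>"
  obtains e where "e > 0" and "\<And>s s'. \<bar>s - t\<bar> < e \<Longrightarrow> \<bar>s' - t\<bar> < e \<Longrightarrow>
     (arccos (fst (\<gamma> s) \<bullet> fst (\<gamma> s')))\<^sup>2 + (snd (\<gamma> s) - snd (\<gamma> s'))\<^sup>2 = (s - s')\<^sup>2"
proof -
  obtain e where "e > 0" and "\<forall>s s'. \<bar>s - t\<bar> < e \<and> \<bar>s' - t\<bar> < e \<longrightarrow>
      sqrt ((arccos (fst (\<gamma> s) \<bullet> fst (\<gamma> s')))\<^sup>2 + (snd (\<gamma> s) - snd (\<gamma> s'))\<^sup>2) = \<bar>s - s'\<bar>"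
    using assms unfolding local_isometry_S2R_def dist_S2R_def by blast
  then show ?thesis
    using that by (metis add_nonneg_nonneg power2_abs real_sqrt_pow2 zero_le_power2)
qed

text \<open>Read \<open>(A1, B1)\<close> and \<open>(A2, B2)\<close> as plane vectors of lengths \<open>d1\<close>, \<open>d2\<close> whose sum
  \<open>(A3, B3)\<close> is dominated componentwise but has length \<open>d1 + d2\<close>: they must be parallel.\<close>
lemma plane_triangle_eq_case:
  fixes A1 A2 A3 B1 B2 B3 d1 d2 :: real
  assumes "0 \<le> A1" "0 \<le> A2" "0 \<le> A3" "0 \<le> B1" "0 \<le> B2" "0 \<le> B3" "0 \<le> d1" "0 \<le> d2"
    and hyp1: "A1\<^sup>2 + B1\<^sup>2 = d1\<^sup>2" and hyp2: "A2\<^sup>2 + B2\<^sup>2 = d2\<^sup>2"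
    and hyp3: "A3\<^sup>2 + B3\<^sup>2 = (d1 + d2)\<^sup>2"
    and "A3 \<le> A1 + A2" "B3 \<le> B1 + B2"
  shows "B3 = B1 + B2" "B1 * d2 = B2 * d1"
proof -
  define P where "P = A1 * A2 + B1 * B2"
  have "(d1 * d2)\<^sup>2 = (A1\<^sup>2 + B1\<^sup>2) * (A2\<^sup>2 + B2\<^sup>2)"
    using hyp1 hyp2 by (simp add: power_mult_distrib)
  then have lagrange: "(d1 * d2)\<^sup>2 - P\<^sup>2 = (A1 * B2 - A2 * B1)\<^sup>2"
    unfolding P_def by (simp add: power2_eq_square algebra_simps)
  then have "P\<^sup>2 \<le> (d1 * d2)\<^sup>2" by (smt (verit) zero_le_power2)
  then have "P \<le> d1 * d2" using assms(7,8) by (meson mult_nonneg_nonneg power2_le_imp_le)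
  moreover have "A3\<^sup>2 \<le> (A1 + A2)\<^sup>2" "B3\<^sup>2 \<le> (B1 + B2)\<^sup>2" using assms by (simp_all add: power_mono)
  moreover have "(A1 + A2)\<^sup>2 + (B1 + B2)\<^sup>2 = d1\<^sup>2 + d2\<^sup>2 + 2 * P"
    unfolding P_def hyp1[symmetric] hyp2[symmetric] by (simp add: power2_eq_square algebra_simps)
  moreover have "(d1 + d2)\<^sup>2 = d1\<^sup>2 + d2\<^sup>2 + 2 * (d1 * d2)" by (simp add: power2_eq_square algebra_simps)
  ultimately have P: "P = d1 * d2" and "B3\<^sup>2 = (B1 + B2)\<^sup>2" using hyp3 by linarith+
  then show "B3 = B1 + B2" using assms by (simp add: power2_eq_iff_nonneg)
  have "A1 * B2 = A2 * B1" using lagrange P by simp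
  then have "(B1 * d2)\<^sup>2 = (B2 * d1)\<^sup>2"
    unfolding power_mult_distrib hyp1[symmetric] hyp2[symmetric]
    by (simp add: power2_eq_square algebra_simps)
  then show "B1 * d2 = B2 * d1" using assms by (simp add: power2_eq_iff_nonneg)
qed

text \<open>Along a local isometry the three points at parameters \<open>t - d'\<close>, \<open>t\<close>, \<open>t + d\<close> have distances
  adding up exactly; by the spherical and the planar triangle inequalities both the arc length
  and the height are then additive, and the height changes in proportion to the parameter.\<close>
lemma local_isometry_height_increments:
  assumes "local_isometry_S2R \<gamma>"
  obtains e where "e > 0" and "\<And>d d'. 0 < d \<Longrightarrow> d < e \<Longrightarrow> 0 < d' \<Longrightarrow> d' < e \<Longrightarrow>
    (snd (\<gamma> (t + d)) - snd (\<gamma> t)) * d' = (snd (\<gamma> t) - snd (\<gamma> (t - d'))) * d"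
proof -
  define \<sigma> where "\<sigma> s = fst (\<gamma> s)" for s
  define h where "h s = snd (\<gamma> s)" for s
  obtain e where e: "e > 0" and pyth: "\<And>s s'. \<bar>s - t\<bar> < e \<Longrightarrow> \<bar>s' - t\<bar> < e \<Longrightarrow>
      (arccos (\<sigma> s \<bullet> \<sigma> s'))\<^sup>2 + \<bar>h s - h s'\<bar>\<^sup>2 = (s - s')\<^sup>2"
    using local_isometry_pythagoras[OF assms, of t] unfolding \<sigma>_def h_def by (metis power2_abs)
  have unit: "norm (\<sigma> s) = 1" for s
    using local_isometry_unit[OF assms] unfolding \<sigma>_def .
  have "(h (t + d) - h t) * d' = (h t - h (t - d')) * d"
    if d: "0 < d" "d < e" "0 < d'" "d' < e" for d d'
  proof -
    have near: "\<bar>(t - d') - t\<bar> < e" "\<bar>t - t\<bar> < e" "\<bar>(t + d) - t\<bar> < e" using d e by auto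
    have p1: "(arccos (\<sigma> (t - d') \<bullet> \<sigma> t))\<^sup>2 + \<bar>h t - h (t - d')\<bar>\<^sup>2 = d'\<^sup>2"
      using pyth[OF near(1,2)] by (simp add: abs_minus_commute power2_commute)
    have p2: "(arccos (\<sigma> t \<bullet> \<sigma> (t + d)))\<^sup>2 + \<bar>h (t + d) - h t\<bar>\<^sup>2 = d\<^sup>2"
      using pyth[OF near(2,3)] by (simp add: abs_minus_commute power2_commute)
    have p3: "(arccos (\<sigma> (t - d') \<bullet> \<sigma> (t + d)))\<^sup>2 + \<bar>h (t + d) - h (t - d')\<bar>\<^sup>2 = (d' + d)\<^sup>2"
      using pyth[OF near(1,3)] by (simp add: abs_minus_commute power2_commute add.commute)
    have "\<bar>h (t + d) - h (t - d')\<bar> = \<bar>h t - h (t - d')\<bar> + \<bar>h (t + d) - h t\<bar>"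
      "\<bar>h t - h (t - d')\<bar> * d = \<bar>h (t + d) - h t\<bar> * d'"
      using plane_triangle_eq_case[OF _ _ _ _ _ _ _ _ p1 p2 p3
          spherical_triangle_ineq[OF unit unit unit]] unit d
      by (auto simp: arccos_unit_inner_nonneg)
    then show ?thesis by (smt (verit) mult_eq_0_iff distrib_right)
  qed
  with e show ?thesis using that unfolding h_def by blast
qed

lemma local_isometry_height_affine:
  assumes "local_isometry_S2R \<gamma>"
  obtains B c where "\<And>t. snd (\<gamma> t) = B * t + c"
proof -
  define h where "h s = snd (\<gamma> s)" for s
  have "\<exists>B e. e > 0 \<and> (\<forall>d. \<bar>d\<bar> < e \<longrightarrow> h (t + d) = h t + B * d)" for t
  proof -
    obtain e where e: "e > 0" and incr: "\<And>d d'. 0 < d \<Longrightarrow> d < e \<Longrightarrow> 0 < d' \<Longrightarrow> d' < e \<Longrightarrow>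
        (h (t + d) - h t) * d' = (h t - h (t - d')) * d"
      using local_isometry_height_increments[OF assms, of t] unfolding h_def by blast
    define B where "B = (h (t + e / 2) - h t) / (e / 2)"
    have "h (t + d) = h t + B * d" if "\<bar>d\<bar> < e" for d
    proof -
      have sym: "h (t + e / 2) - h t = h t - h (t - e / 2)" using incr[of "e / 2" "e / 2"] e by simp
      consider "d > 0" | "d = 0" | "d < 0" by linarith
      then show ?thesis
      proof cases
        case 1
        then have "(h (t + d) - h t) * (e / 2) = (h (t + e / 2) - h t) * d"
          using incr[of d "e / 2"] that e unfolding sym by simp
        then show ?thesis using e by (simp add: B_def field_simps)
      next
        case 3
        then have "(h (t + e / 2) - h t) * (- d) = (h t - h (t + d)) * (e / 2)"
          using incr[of "e / 2" "- d"] that e by simp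
        then show ?thesis using e by (simp add: B_def field_simps)
      qed simp
    qed
    with e show ?thesis by blast
  qed
  then obtain B c where "\<And>t. h t = B * t + c" using locally_affine_imp_affine by metis
  then show ?thesis using that unfolding h_def by blast
qed

lemma local_isometry_arc_length_sq:
  assumes "local_isometry_S2R \<gamma>" and height: "\<And>t. snd (\<gamma> t) = B * t + c"
  obtains e where "e > 0" and "\<And>s s'. \<bar>s - t\<bar> < e \<Longrightarrow> \<bar>s' - t\<bar> < e \<Longrightarrow>
      (arccos (fst (\<gamma> s) \<bullet> fst (\<gamma> s')))\<^sup>2 = (1 - B\<^sup>2) * (s - s')\<^sup>2"
proof -
  obtain e where "e > 0" and pyth: "\<And>s s'. \<bar>s - t\<bar> < e \<Longrightarrow> \<bar>s' - t\<bar> < e \<Longrightarrow>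
      (arccos (fst (\<gamma> s) \<bullet> fst (\<gamma> s')))\<^sup>2 + (snd (\<gamma> s) - snd (\<gamma> s'))\<^sup>2 = (s - s')\<^sup>2"
    using local_isometry_pythagoras[OF assms(1)] by metis
  have sq: "(snd (\<gamma> s) - snd (\<gamma> s'))\<^sup>2 = B\<^sup>2 * (s - s')\<^sup>2" for s s'
    unfolding height by (simp add: power_mult_distrib flip: right_diff_distrib)
  have "(arccos (fst (\<gamma> s) \<bullet> fst (\<gamma> s')))\<^sup>2 = (1 - B\<^sup>2) * (s - s')\<^sup>2"
    if "\<bar>s - t\<bar> < e" "\<bar>s' - t\<bar> < e" for s s'
    using pyth[OF that] unfolding sq left_diff_distrib by linarith
  with \<open>e > 0\<close> show ?thesis using that by blast
qed

lemma local_isometry_arc_length: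
  assumes "local_isometry_S2R \<gamma>" and height: "\<And>t. snd (\<gamma> t) = B * t + c"
  shows "B\<^sup>2 \<le> 1"
    and "\<exists>e>0. \<forall>s s'. \<bar>s - t\<bar> < e \<and> \<bar>s' - t\<bar> < e \<longrightarrow>
           arccos (fst (\<gamma> s) \<bullet> fst (\<gamma> s')) = sqrt (1 - B\<^sup>2) * \<bar>s - s'\<bar>"
proof -
  obtain e where "e > 0" and arc_sq0: "\<And>s s'. \<bar>s - 0\<bar> < e \<Longrightarrow> \<bar>s' - 0\<bar> < e \<Longrightarrow>
      (arccos (fst (\<gamma> s) \<bullet> fst (\<gamma> s')))\<^sup>2 = (1 - B\<^sup>2) * (s - s')\<^sup>2"
    using local_isometry_arc_length_sq[OF assms] by blast
  then have "(arccos (fst (\<gamma> (e / 2)) \<bullet> fst (\<gamma> 0)))\<^sup>2 = (1 - B\<^sup>2) * (e / 2)\<^sup>2" by simp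
  then have "0 \<le> (1 - B\<^sup>2) * (e / 2)\<^sup>2" by (metis zero_le_power2)
  then show "B\<^sup>2 \<le> 1" using \<open>e > 0\<close> by (simp add: zero_le_mult_iff)
  have unit: "norm (fst (\<gamma> s)) = 1" for s using local_isometry_unit[OF assms(1)] .
  obtain e where "e > 0" and arc_sq: "\<And>s s'. \<bar>s - t\<bar> < e \<Longrightarrow> \<bar>s' - t\<bar> < e \<Longrightarrow>
      (arccos (fst (\<gamma> s) \<bullet> fst (\<gamma> s')))\<^sup>2 = (1 - B\<^sup>2) * (s - s')\<^sup>2"
    using local_isometry_arc_length_sq[OF assms] by blast
  have "arccos (fst (\<gamma> s) \<bullet> fst (\<gamma> s')) = sqrt (1 - B\<^sup>2) * \<bar>s - s'\<bar>"
    if "\<bar>s - t\<bar> < e" "\<bar>s' - t\<bar> < e" for s s'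
  proof -
    have "arccos (fst (\<gamma> s) \<bullet> fst (\<gamma> s')) = sqrt ((arccos (fst (\<gamma> s) \<bullet> fst (\<gamma> s')))\<^sup>2)"
      using arccos_unit_inner_nonneg[OF unit unit] by simp
    also have "\<dots> = sqrt ((1 - B\<^sup>2) * (s - s')\<^sup>2)" using arc_sq that by simp
    finally show ?thesis by (simp add: real_sqrt_mult)
  qed
  with \<open>e > 0\<close> show "\<exists>e>0. \<forall>s s'. \<bar>s - t\<bar> < e \<and> \<bar>s' - t\<bar> < e \<longrightarrow>
      arccos (fst (\<gamma> s) \<bullet> fst (\<gamma> s')) = sqrt (1 - B\<^sup>2) * \<bar>s - s'\<bar>"
    by blast
qed

lemma local_isometry_cases:
  assumes "local_isometry_S2R \<gamma>"
  obtains U V a B c where "orthonormal_pair U V" "a\<^sup>2 + B\<^sup>2 = 1"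
    "\<And>t. \<gamma> t = (great_circle U V (a * t), B * t + c)"
proof -
  obtain B c where height: "\<And>t. snd (\<gamma> t) = B * t + c"
    using local_isometry_height_affine[OF assms] by blast
  define a where "a = sqrt (1 - B\<^sup>2)"
  have "B\<^sup>2 \<le> 1" and arc: "\<And>t. \<exists>e>0. \<forall>s s'. \<bar>s - t\<bar> < e \<and> \<bar>s' - t\<bar> < e \<longrightarrow>
      arccos (fst (\<gamma> s) \<bullet> fst (\<gamma> s')) = a * \<bar>s - s'\<bar>"
    using local_isometry_arc_length[OF assms height] unfolding a_def by blast+
  then have aB: "a\<^sup>2 + B\<^sup>2 = 1" "a \<ge> 0" by (simp_all add: a_def)
  have unit: "norm (fst (\<gamma> s)) = 1" for s using local_isometry_unit[OF assms] .
  obtain U V where UV: "orthonormal_pair U V" "\<And>t. fst (\<gamma> t) = great_circle U V (a * t)"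
  proof (cases "a = 0")
    case True
    have "fst (\<gamma> t) = fst (\<gamma> 0)" for t
      by (rule zero_arc_length_imp_constant[of "\<lambda>t. fst (\<gamma> t)", OF unit])
        (use arc True in simp)
    moreover obtain V where "orthonormal_pair (fst (\<gamma> 0)) V"
      using orthonormal_pair_exists[OF _ unit] by auto
    moreover have "great_circle (fst (\<gamma> 0)) V (a * t) = fst (\<gamma> 0)" for t
      using True by simp
    ultimately show ?thesis using that by metis
  next
    case False
    then have "a > 0" using aB(2) by simp
    from locally_great_circle_imp_great_circle[OF False
        arc_length_locally_great_circle_at[OF unit this arc]]
    show ?thesis using that by blast
  qed
  show ?thesis
    using that[OF UV(1) aB(1)] UV(2) height by (metis prod.collapse)
qed

definition horizontal_circle :: "real^3 \<Rightarrow> real^3 \<Rightarrow> real \<Rightarrow> pt set" where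
  "horizontal_circle U V r = (\<lambda>t. (great_circle U V t, r)) ` UNIV"

text \<open>Horizontal great circles are not helices, since a helix is parametrized by its height.\<close>
definition helix :: "real^3 \<Rightarrow> real^3 \<Rightarrow> real \<Rightarrow> real \<Rightarrow> pt set" where
  "helix U V k p = (\<lambda>z. (great_circle U V (k * z + p), z)) ` UNIV"

lemma mem_horizontal_circle: "(x, z) \<in> horizontal_circle U V r \<longleftrightarrow> z = r \<and> (\<exists>t. x = great_circle U V t)"
  unfolding horizontal_circle_def by auto

lemma mem_horizontal_circle_iff:
  "y \<in> horizontal_circle U V r \<longleftrightarrow> fst y \<in> range (great_circle U V) \<and> snd y = r"
  by (cases y) (auto simp: mem_horizontal_circle)

lemma mem_helix: "(x, z) \<in> helix U V k p \<longleftrightarrow> x = great_circle U V (k * z + p)"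
  unfolding helix_def by auto

lemma fst_mem_helix: "y \<in> helix U V k p \<Longrightarrow> fst y \<in> range (great_circle U V)"
  unfolding helix_def by auto

lemma helix_0: "helix U V 0 p = {great_circle U V p} \<times> UNIV"
  unfolding helix_def by auto

lemma range_affine_real:
  assumes "B \<noteq> 0"
  shows "range (\<lambda>t::real. B * t + c) = UNIV"
proof -
  have "z = B * ((z - c) / B) + c" for z using assms by simp
  then show ?thesis by blast
qed

lemma geodesic_cases:
  assumes "geodesic_S2R G"
  obtains U V r where "orthonormal_pair U V" "G = horizontal_circle U V r"
    | U V k p where "orthonormal_pair U V" "G = helix U V k p"
proof -
  obtain \<gamma> where \<gamma>_isom: "local_isometry_S2R \<gamma>" and G: "G = range \<gamma>"
    using assms unfolding geodesic_S2R_def by blast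
  obtain U V a B c where UV: "orthonormal_pair U V" and aB: "a\<^sup>2 + B\<^sup>2 = 1"
    and \<gamma>: "\<And>t. \<gamma> t = (great_circle U V (a * t), B * t + c)"
    using local_isometry_cases[OF \<gamma>_isom] by blast
  show ?thesis
  proof (cases "B = 0")
    case True
    then have "a \<noteq> 0" using aB by auto
    have "G = (\<lambda>s. (great_circle U V s, c)) ` range (\<lambda>t. a * t + 0)"
      unfolding G \<gamma> True image_image by simp
    then have "G = horizontal_circle U V c"
      unfolding range_affine_real[OF \<open>a \<noteq> 0\<close>] horizontal_circle_def .
    then show ?thesis using that(1) UV by blast
  next
    case False
    have "a / B * (B * t + c) + - (a * c / B) = a * t" for t using False by (simp add: field_simps)
    then have "G = (\<lambda>z. (great_circle U V (a / B * z + - (a * c / B)), z)) ` range (\<lambda>t. B * t + c)"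
      unfolding G \<gamma> image_image by simp
    then have "G = helix U V (a / B) (- (a * c / B))"
      unfolding range_affine_real[OF False] helix_def .
    then show ?thesis using that(2) UV by blast
  qed
qed

lemma local_isometry_great_circle_line:
  assumes UV: "orthonormal_pair U V" and aB: "a\<^sup>2 + B\<^sup>2 = 1"
  shows "local_isometry_S2R (\<lambda>t. (great_circle U V (a * t + p), B * t + c))"
  unfolding local_isometry_S2R_def
proof (intro conjI allI exI[of _ 1] impI)
  fix t show "(great_circle U V (a * t + p), B * t + c) \<in> S2R"
    unfolding S2R_def using norm_great_circle[OF UV] by simp
next
  fix t s s' :: real
  assume "\<bar>s - t\<bar> < 1 \<and> \<bar>s' - t\<bar> < 1"
  then have "\<bar>s - s'\<bar> \<le> 2" by linarith
  moreover have "a\<^sup>2 \<le> 1" using aB by (smt (verit) zero_le_power2)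
  then have "\<bar>a\<bar> \<le> 1" by (simp add: abs_square_le_1)
  ultimately have "\<bar>a\<bar> * \<bar>s - s'\<bar> \<le> 1 * 2" by (intro mult_mono) auto
  then have "\<bar>(a * s + p) - (a * s' + p)\<bar> \<le> pi"
    using pi_gt3 by (simp add: abs_mult flip: right_diff_distrib)
  then have "arccos (great_circle U V (a * s + p) \<bullet> great_circle U V (a * s' + p)) = \<bar>a\<bar> * \<bar>s - s'\<bar>"
    using arccos_great_circle_inner[OF UV] by (simp add: abs_mult flip: right_diff_distrib)
  moreover have "B * s + c - (B * s' + c) = B * (s - s')" by (simp add: algebra_simps)
  then have "(\<bar>a\<bar> * \<bar>s - s'\<bar>)\<^sup>2 + (B * s + c - (B * s' + c))\<^sup>2 = (a\<^sup>2 + B\<^sup>2) * (s - s')\<^sup>2"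
    by (simp add: power_mult_distrib distrib_right)
  ultimately show "dist_S2R (great_circle U V (a * s + p), B * s + c)
      (great_circle U V (a * s' + p), B * s' + c) = \<bar>s - s'\<bar>"
    unfolding dist_S2R_def aB by simp
qed simp

lemma horizontal_circle_geodesic:
  assumes "orthonormal_pair U V"
  shows "geodesic_S2R (horizontal_circle U V r)"
proof -
  have "horizontal_circle U V r = range (\<lambda>t. (great_circle U V (1 * t + 0), 0 * t + r))"
    unfolding horizontal_circle_def by simp
  moreover have "local_isometry_S2R (\<lambda>t. (great_circle U V (1 * t + 0), 0 * t + r))"
    by (rule local_isometry_great_circle_line[OF assms]) simp
  ultimately show ?thesis unfolding geodesic_S2R_def by blast
qed

lemma helix_geodesic:
  assumes "orthonormal_pair U V"
  shows "geodesic_S2R (helix U V k p)"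
proof -
  define m where "m = 1 / sqrt (1 + k\<^sup>2)"
  have "sqrt (1 + k\<^sup>2) > 0" by (simp add: add_pos_nonneg)
  then have "m \<noteq> 0" and m: "(k * m)\<^sup>2 + m\<^sup>2 = 1"
    unfolding m_def by (simp_all add: power_divide power_mult_distrib field_simps)
  have "range (\<lambda>t. (great_circle U V ((k * m) * t + p), m * t + 0))
      = (\<lambda>z. (great_circle U V (k * z + p), z)) ` range (\<lambda>t. m * t + 0)"
    by (simp only: image_image) (simp add: mult.assoc)
  also have "\<dots> = helix U V k p"
    unfolding range_affine_real[OF \<open>m \<noteq> 0\<close>] helix_def ..
  finally have "helix U V k p = range (\<lambda>t. (great_circle U V ((k * m) * t + p), m * t + 0))" ..
  with local_isometry_great_circle_line[OF assms m] show ?thesis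
    unfolding geodesic_S2R_def by blast
qed

lemma geodesic_subset_S2R: "geodesic_S2R G \<Longrightarrow> G \<subseteq> S2R"
  unfolding geodesic_S2R_def local_isometry_S2R_def by auto

lemma horizontal_geod_iff:
  "horizontal_geod G \<longleftrightarrow> (\<exists>U V r. orthonormal_pair U V \<and> G = horizontal_circle U V r)"
proof
  assume "horizontal_geod G"
  then obtain r where "geodesic_S2R G" and r: "G \<subseteq> UNIV \<times> {r}"
    unfolding horizontal_geod_def by blast
  then show "\<exists>U V r. orthonormal_pair U V \<and> G = horizontal_circle U V r"
  proof (cases rule: geodesic_cases)
    case (2 U V k p)
    then have "(great_circle U V (k * (r + 1) + p), r + 1) \<in> G" by (simp add: mem_helix)
    then show ?thesis using r by auto
  qed blast
next
  assume "\<exists>U V r. orthonormal_pair U V \<and> G = horizontal_circle U V r"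
  then show "horizontal_geod G"
    unfolding horizontal_geod_def using horizontal_circle_geodesic
    by (auto simp: horizontal_circle_def)
qed

lemma nonhorizontal_geodesic_helix:
  assumes "geodesic_S2R G" "\<not> horizontal_geod G"
  obtains U V k p where "orthonormal_pair U V" "G = helix U V k p"
  using assms(1)
proof (cases rule: geodesic_cases)
  case (1 U V r)
  then show ?thesis using assms(2) horizontal_geod_iff by blast
qed (rule that)

lemma vertical_geod_helix_0:
  assumes "orthonormal_pair U V"
  shows "vertical_geod (helix U V 0 p)"
  unfolding vertical_geod_def
  using helix_geodesic[OF assms] norm_great_circle[OF assms] helix_0 by blast

section \<open>Incidences of horizontal circles and helices\<close>

lemma helix_level_inj:
  "y1 \<in> helix U V k p \<Longrightarrow> y2 \<in> helix U V k p \<Longrightarrow> snd y1 = snd y2 \<Longrightarrow> y1 = y2"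
  unfolding helix_def by auto

lemma horizontal_geod_level:
  assumes "horizontal_geod H" "y1 \<in> H" "y2 \<in> H"
  shows "snd y1 = snd y2"
proof -
  obtain r where "H \<subseteq> UNIV \<times> {r}" using assms(1) unfolding horizontal_geod_def by blast
  then have "snd y1 = r" "snd y2 = r" using assms(2,3) by (auto simp: mem_Times_iff)
  then show ?thesis by simp
qed

lemma nonhorizontal_geod_level_inj:
  assumes "geodesic_S2R G" "\<not> horizontal_geod G" "y1 \<in> G" "y2 \<in> G" "snd y1 = snd y2"
  shows "y1 = y2"
proof -
  obtain U V k p where "G = helix U V k p" using nonhorizontal_geodesic_helix[OF assms(1,2)] .
  then show ?thesis using helix_level_inj assms(3-5) by blast
qed

text \<open>By the Chebyshev recursion in great_circle_reflect, the point of a helix at height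
  \<open>2 z2 - z1\<close> is determined by its points at heights \<open>z1\<close> and \<open>z2\<close>.\<close>
lemma nonhorizontal_geods_third_common_point:
  assumes "geodesic_S2R G1" "\<not> horizontal_geod G1" "geodesic_S2R G2" "\<not> horizontal_geod G2"
    and "y1 \<in> G1 \<inter> G2" "y2 \<in> G1 \<inter> G2"
  shows "\<exists>y \<in> G1 \<inter> G2. snd y = 2 * snd y2 - snd y1"
proof -
  obtain U1 V1 k1 p1 where o1: "orthonormal_pair U1 V1" and G1: "G1 = helix U1 V1 k1 p1"
    using nonhorizontal_geodesic_helix[OF assms(1,2)] by blast
  obtain U2 V2 k2 p2 where o2: "orthonormal_pair U2 V2" and G2: "G2 = helix U2 V2 k2 p2"
    using nonhorizontal_geodesic_helix[OF assms(3,4)] by blast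
  define c1 where "c1 z = great_circle U1 V1 (k1 * z + p1)" for z
  define c2 where "c2 z = great_circle U2 V2 (k2 * z + p2)" for z
  have "c1 (snd y) = fst y" "c2 (snd y) = fst y" if "y \<in> G1 \<inter> G2" for y
    using that unfolding G1 G2 c1_def c2_def by (auto simp: helix_def)
  then have "c1 (2 * snd y2 - snd y1) = c2 (2 * snd y2 - snd y1)"
    using great_circle_reflect[OF o1] great_circle_reflect[OF o2] assms(5,6)
    unfolding c1_def c2_def by metis
  then have "(c1 (2 * snd y2 - snd y1), 2 * snd y2 - snd y1) \<in> G1 \<inter> G2"
    unfolding G1 G2 c1_def c2_def by (simp add: mem_helix)
  then show ?thesis by force
qed

definition antipode :: "pt \<Rightarrow> pt" where
  "antipode x = (- fst x, snd x)"

lemma antipode_in_S2R: "x \<in> S2R \<Longrightarrow> antipode x \<in> S2R"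
  unfolding antipode_def S2R_def by (auto simp: case_prod_beta)

lemma antipode_neq: "x \<in> S2R \<Longrightarrow> antipode x \<noteq> x"
  unfolding antipode_def S2R_def by (auto simp: case_prod_beta prod_eq_iff dest: neg_neq_unit)

lemma antipode_mem_horizontal_geod:
  assumes "horizontal_geod H" "y \<in> H"
  shows "antipode y \<in> H"
proof -
  obtain U V r where H: "H = horizontal_circle U V r" using assms(1) horizontal_geod_iff by blast
  have "- great_circle U V t \<in> range (great_circle U V)" for t
    by (metis great_circle_add_pi rangeI)
  then show ?thesis
    using assms(2) unfolding H mem_horizontal_circle_iff antipode_def by auto
qed

lemma horizontal_circle_Int:
  assumes UV: "orthonormal_pair U V" and UW: "orthonormal_pair U W" and VW: "orthonormal_pair V W"
  shows "horizontal_circle U V r \<inter> horizontal_circle U W r = {(U, r), antipode (U, r)}"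
proof (intro equalityI subsetI)
  fix y assume "y \<in> horizontal_circle U V r \<inter> horizontal_circle U W r"
  then obtain t s where y: "y = (great_circle U V t, r)" "great_circle U V t = great_circle U W s"
    unfolding horizontal_circle_def by auto
  have "great_circle U W s \<bullet> V = 0"
    using orthonormal_pair_inner[OF UV] orthonormal_pair_inner[OF VW]
    by (intro great_circle_inner_orthogonal) (simp_all add: inner_commute)
  then have "sin t = 0" using great_circle_inner(2)[OF UV, of t] y(2) by simp
  then have "cos t = 1 \<or> cos t = -1"
    using sin_cos_squared_add[of t] by (simp add: power2_eq_1_iff)
  with \<open>sin t = 0\<close> show "y \<in> {(U, r), antipode (U, r)}"
    unfolding y(1) great_circle_def antipode_def by auto
next
  have "great_circle U X pi = - U" for X :: "real^3" using great_circle_add_pi[of U X 0] by simp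
  then have "(U, r) \<in> horizontal_circle U X r" "(- U, r) \<in> horizontal_circle U X r" for X
    unfolding mem_horizontal_circle by (metis great_circle_0)+
  then show "y \<in> horizontal_circle U V r \<inter> horizontal_circle U W r"
    if "y \<in> {(U, r), antipode (U, r)}" for y
    using that unfolding antipode_def by auto
qed

lemma horizontal_geod_partner:
  assumes "orthonormal_pair U V"
  obtains H where "horizontal_geod H" "horizontal_circle U V r \<inter> H = {(U, r), antipode (U, r)}"
proof -
  obtain W where "orthonormal_pair U W" "orthonormal_pair V W"
    using orthonormal_pair_extend[OF _ assms] by auto
  then show ?thesis
    using that horizontal_circle_Int[OF assms] horizontal_geod_iff by blast
qed

lemma horizontal_geod_through:
  assumes "x \<in> S2R" "y \<in> S2R" "snd x = snd y"
  obtains H where "horizontal_geod H" "x \<in> H" "y \<in> H"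
proof -
  have unit: "norm (fst x) = 1" "norm (fst y) = 1"
    using assms(1,2) unfolding S2R_def by (auto simp: case_prod_beta)
  obtain V where V: "orthonormal_pair (fst x) V" "fst y \<in> range (great_circle (fst x) V)"
    using great_circle_through[OF unit] .
  then have "x \<in> horizontal_circle (fst x) V (snd x)" "y \<in> horizontal_circle (fst x) V (snd x)"
    using assms(3) unfolding mem_horizontal_circle_iff by (auto intro: range_eqI[of _ _ 0])
  with V(1) show ?thesis using that horizontal_geod_iff by blast
qed

lemma vertical_line_geodesic:
  fixes q :: "real^3"
  assumes "norm q = 1"
  shows "geodesic_S2R ({q} \<times> UNIV)"
proof -
  obtain V where "orthonormal_pair q V" using orthonormal_pair_exists[OF _ assms] by auto
  then show ?thesis using helix_geodesic[of q V 0 0] helix_0 by simp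
qed

lemma nonhorizontal_geod_meets_level:
  assumes "geodesic_S2R G" "\<not> horizontal_geod G"
  obtains y where "y \<in> G" "snd y = z"
proof -
  obtain U V k p where "G = helix U V k p" using nonhorizontal_geodesic_helix[OF assms] .
  then show ?thesis using that[of "(great_circle U V (k * z + p), z)"] by (simp add: mem_helix)
qed

lemma nonhorizontal_geod_through_point:
  assumes "geodesic_S2R G" "\<not> horizontal_geod G" "(q, z) \<in> G"
  shows "G = {q} \<times> UNIV \<or> (\<exists>z'. (- q, z') \<in> G)"
proof -
  obtain U V k p where G: "G = helix U V k p" using nonhorizontal_geodesic_helix[OF assms(1,2)] .
  then have q: "q = great_circle U V (k * z + p)" using assms(3) by (simp add: mem_helix)
  show ?thesis
  proof (cases "k = 0")
    case True
    then show ?thesis using G q helix_0 by simp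
  next
    case False
    then have ang: "k * (z + pi / k) + p = (k * z + p) + pi" by (simp add: algebra_simps)
    have "(- q, z + pi / k) \<in> G" by (simp only: G mem_helix ang great_circle_add_pi q)
    then show ?thesis by blast
  qed
qed

lemma nonhorizontal_geod_in_antipodal_lines:
  assumes "geodesic_S2R G" "\<not> horizontal_geod G" "\<And>g. g \<in> G \<Longrightarrow> fst g = q \<or> fst g = - q"
  shows "vertical_geod G"
proof -
  obtain U V k p where o: "orthonormal_pair U V" and G: "G = helix U V k p"
    using nonhorizontal_geodesic_helix[OF assms(1,2)] .
  show ?thesis
  proof (cases "k = 0")
    case True
    then show ?thesis using vertical_geod_helix_0[OF o] G by simp
  next
    case False
    then have ang: "k * ((0 - p) / k) + p = 0" "k * ((pi / 2 - p) / k) + p = pi / 2" by simp_all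
    have "(U, (0 - p) / k) \<in> G" "(V, (pi / 2 - p) / k) \<in> G"
      unfolding G mem_helix ang by simp_all
    then have "U = q \<or> U = - q" "V = q \<or> V = - q" using assms(3) by force+
    then have "V = U \<or> V = - U" by auto
    then show ?thesis using orthonormal_pair_inner[OF o] by auto
  qed
qed

lemma perpendicular_helices_no_antipode:
  assumes UV: "orthonormal_pair U V" and UW: "orthonormal_pair U W" and VW: "orthonormal_pair V W"
    and "y \<in> helix U W k p"
  shows "antipode y \<notin> helix U V k p"
proof
  assume "antipode y \<in> helix U V k p"
  moreover obtain z where "y = (great_circle U W (k * z + p), z)" using assms(4) unfolding helix_def by blast
  ultimately obtain t where eq: "- great_circle U W t = great_circle U V t"
    unfolding antipode_def by (auto simp: mem_helix)
  have "great_circle U W t \<bullet> V = 0"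
    using orthonormal_pair_inner[OF UV] orthonormal_pair_inner[OF VW]
    by (intro great_circle_inner_orthogonal) simp_all
  then have "sin t = 0" using great_circle_inner(2)[OF UV, of t] eq by (metis inner_minus_left neg_0_equal_iff_equal)
  moreover have "cos t = 0" using great_circle_inner(1)[OF UV, of t] great_circle_inner(1)[OF UW, of t] eq
    by (metis inner_minus_left neg_equal_zero)
  ultimately show False using sin_cos_squared_add[of t] by simp
qed

text \<open>The witness \<open>G\<close> is the helix of the same slope over a perpendicular great circle.\<close>
lemma slant_geod_companion:
  assumes "slant_geod S"
  obtains G a b where "geodesic_S2R G" "G \<noteq> S" "a \<in> S \<inter> G" "b \<in> S \<inter> G" "a \<noteq> b"
    "\<And>y. y \<in> G \<Longrightarrow> antipode y \<notin> S"
proof -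
  have gS: "geodesic_S2R S" and nv: "\<not> vertical_geod S" and nh: "\<not> horizontal_geod S"
    using assms unfolding slant_geod_def by auto
  obtain U V k p where o: "orthonormal_pair U V" and S: "S = helix U V k p"
    using nonhorizontal_geodesic_helix[OF gS nh] .
  have "k \<noteq> 0" using nv vertical_geod_helix_0[OF o] S by blast
  obtain W where UW: "orthonormal_pair U W" and VW: "orthonormal_pair V W"
    using orthonormal_pair_extend[OF _ o] by auto
  define G where "G = helix U W k p"
  have angles: "k * ((0 - p) / k) + p = 0" "k * ((0 + pi - p) / k) + p = 0 + pi"
    "k * ((pi / 2 - p) / k) + p = pi / 2"
    using \<open>k \<noteq> 0\<close> by simp_all
  have ab: "(U, (0 - p) / k) \<in> S \<inter> G" "(- U, (0 + pi - p) / k) \<in> S \<inter> G"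
    unfolding S G_def Int_iff mem_helix angles great_circle_add_pi by simp_all
  have "(0 - p) / k \<noteq> (0 + pi - p) / k" using \<open>k \<noteq> 0\<close> by (simp add: divide_simps)
  then have "(U, (0 - p) / k) \<noteq> (- U, (0 + pi - p) / k)" by simp
  moreover have "G \<noteq> S"
  proof
    assume "G = S"
    moreover have "(W, (pi / 2 - p) / k) \<in> G" unfolding G_def mem_helix angles by simp
    ultimately have "(W, (pi / 2 - p) / k) \<in> S" by simp
    then have "W = great_circle U V (pi / 2)" unfolding S mem_helix angles by simp
    then have "W \<in> range (great_circle U V)" by blast
    then show False using orthonormal_not_on_great_circle[OF UW VW] by blast
  qed
  ultimately show ?thesis
    using that helix_geodesic[OF UW] ab perpendicular_helices_no_antipode[OF o UW VW]
    unfolding G_def S by blast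
qed

section \<open>A configuration detecting vertical alignment\<close>

text \<open>Points \<open>x\<close> and \<open>y\<close> at different heights are joined by geodesics that do not all lie over one
  great circle, as witnessed at a common level: the horizontal geodesic \<open>H\<close> through \<open>a1\<close> and \<open>a3\<close>
  misses \<open>a2\<close>. The property only involves geodesics, levels and antipodes.\<close>
definition joined_over_distinct_circles :: "pt \<Rightarrow> pt \<Rightarrow> bool" where
  "joined_over_distinct_circles x y \<longleftrightarrow> snd x \<noteq> snd y \<and>
     (\<exists>G1 G2 G3 a1 a2 a3 H. geodesic_S2R G1 \<and> geodesic_S2R G2 \<and> geodesic_S2R G3 \<and>
        {x, y} \<subseteq> G1 \<inter> G2 \<inter> G3 \<and>
        a1 \<in> G1 \<and> a2 \<in> G2 \<and> a3 \<in> G3 \<and> snd a2 = snd a1 \<and> snd a3 = snd a1 \<and>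
        a3 \<noteq> a1 \<and> a3 \<noteq> antipode a1 \<and> horizontal_geod H \<and> a1 \<in> H \<and> a3 \<in> H \<and> a2 \<notin> H)"

lemma joining_geodesic_over_great_circle:
  assumes UV: "orthonormal_pair U V" and xy: "fst x \<in> range (great_circle U V)" "fst y \<in> range (great_circle U V)"
    and ne: "fst y \<noteq> fst x" "fst y \<noteq> - fst x"
    and G: "geodesic_S2R G" "x \<in> G" "y \<in> G" "snd x \<noteq> snd y"
    and a: "a \<in> G"
  shows "fst a \<in> range (great_circle U V)"
proof -
  have "\<not> horizontal_geod G" using horizontal_geod_level G(2-4) by blast
  then obtain U' V' k p where UV': "orthonormal_pair U' V'" and G_eq: "G = helix U' V' k p"
    using nonhorizontal_geodesic_helix[OF G(1)] by blast
  then have "fst x \<in> range (great_circle U' V')" "fst y \<in> range (great_circle U' V')"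
    "fst a \<in> range (great_circle U' V')"
    using G(2,3) a fst_mem_helix by blast+
  moreover have "range (great_circle U' V') = range (great_circle U V)"
    using great_circle_range_eqI[OF UV' UV calculation(1,2) xy ne] .
  ultimately show ?thesis by simp
qed

lemma joined_over_distinct_circles_imp_aligned:
  assumes "joined_over_distinct_circles x y"
  shows "fst y = fst x \<or> fst y = - fst x"
proof (rule ccontr)
  assume "\<not> ?thesis"
  then have ne: "fst y \<noteq> fst x" "fst y \<noteq> - fst x" by auto
  obtain G1 G2 G3 a1 a2 a3 H where levels: "snd x \<noteq> snd y"
    and G: "geodesic_S2R G1" "geodesic_S2R G2" "geodesic_S2R G3" "{x, y} \<subseteq> G1 \<inter> G2 \<inter> G3"
    and a: "a1 \<in> G1" "a2 \<in> G2" "a3 \<in> G3" "snd a2 = snd a1" "snd a3 = snd a1"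
      "a3 \<noteq> a1" "a3 \<noteq> antipode a1"
    and H: "horizontal_geod H" "a1 \<in> H" "a3 \<in> H" "a2 \<notin> H"
    using assms unfolding joined_over_distinct_circles_def by (elim conjE exE) (rule that)
  have "x \<in> S2R" "y \<in> S2R" using G(1,4) geodesic_subset_S2R by blast+
  then have "norm (fst x) = 1" "norm (fst y) = 1" unfolding S2R_def by (auto simp: case_prod_beta)
  then obtain V where UV: "orthonormal_pair (fst x) V" "fst y \<in> range (great_circle (fst x) V)"
    by (rule great_circle_through)
  have xy: "fst x \<in> range (great_circle (fst x) V)" by (metis great_circle_0 rangeI)
  have circle: "fst a \<in> range (great_circle (fst x) V)" if "geodesic_S2R G" "{x, y} \<subseteq> G" "a \<in> G" for G a
    using joining_geodesic_over_great_circle[OF UV(1) xy UV(2) ne] levels that by blast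
  obtain U' V' r where UV': "orthonormal_pair U' V'" and H_eq: "H = horizontal_circle U' V' r"
    using H(1) horizontal_geod_iff by blast
  have "fst a3 \<noteq> fst a1" "fst a3 \<noteq> - fst a1"
    using a(5-7) by (auto simp: prod_eq_iff antipode_def)
  then have "range (great_circle (fst x) V) = range (great_circle U' V')"
    using great_circle_range_eqI[OF UV(1) UV'] circle[OF G(1) _ a(1)] circle[OF G(3) _ a(3)] G(4) H(2,3)
    unfolding H_eq mem_horizontal_circle_iff by auto
  moreover have "fst a2 \<in> range (great_circle (fst x) V)" using circle[OF G(2) _ a(2)] G(4) by auto
  moreover have "snd a2 = r" using a(4) H(2) unfolding H_eq mem_horizontal_circle_iff by simp
  ultimately have "a2 \<in> H" unfolding H_eq mem_horizontal_circle_iff by simp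
  with H(4) show False ..
qed

lemma vertical_pair_joined_over_distinct_circles:
  fixes p :: "real^3"
  assumes p: "norm p = 1" and "r \<noteq> s"
  shows "joined_over_distinct_circles (p, r) (p, s)"
proof -
  obtain V where pV: "orthonormal_pair p V" using orthonormal_pair_exists[OF _ p] by auto
  obtain W where pW: "orthonormal_pair p W" and VW: "orthonormal_pair V W"
    using orthonormal_pair_extend[OF _ pV] by auto
  define k where "k = 2 * pi / (s - r)"
  define z0 where "z0 = r + (s - r) / 4"
  have angles: "k * r + - (k * r) = 0" "k * s + - (k * r) = 2 * pi"
    "2 * k * r + - (2 * k * r) = 0" "2 * k * s + - (2 * k * r) = 4 * pi"
    "k * z0 + - (k * r) = pi / 2" "2 * k * z0 + - (2 * k * r) = 0 + pi"
  proof -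
    have "k * (s - r) = 2 * pi" "k * (z0 - r) = pi / 2"
      using assms(2) by (simp_all add: k_def z0_def)
    then show "k * r + - (k * r) = 0" "k * s + - (k * r) = 2 * pi"
      "2 * k * r + - (2 * k * r) = 0" "2 * k * s + - (2 * k * r) = 4 * pi"
      "k * z0 + - (k * r) = pi / 2" "2 * k * z0 + - (2 * k * r) = 0 + pi"
      by (simp_all add: algebra_simps)
  qed
  have [simp]: "great_circle p V (4 * pi) = p" by (simp add: great_circle_def)
  define G1 where "G1 = helix p V k (- (k * r))"
  define G2 where "G2 = helix p W k (- (k * r))"
  define G3 where "G3 = helix p V (2 * k) (- (2 * k * r))"
  define H where "H = horizontal_circle p V z0"
  have geod: "geodesic_S2R G1" "geodesic_S2R G2" "geodesic_S2R G3"
    unfolding G1_def G2_def G3_def using helix_geodesic pV pW by blast+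
  have "(p, r) \<in> G1" "(p, s) \<in> G1" "(p, r) \<in> G2" "(p, s) \<in> G2" "(p, r) \<in> G3" "(p, s) \<in> G3"
    unfolding G1_def G2_def G3_def mem_helix angles by simp_all
  then have "{(p, r), (p, s)} \<subseteq> G1 \<inter> G2 \<inter> G3" by simp
  moreover have "(V, z0) \<in> G1" "(W, z0) \<in> G2" "(- p, z0) \<in> G3"
    unfolding G1_def G2_def G3_def mem_helix angles great_circle_add_pi by simp_all
  moreover have "(V, z0) \<in> H" "(- p, z0) \<in> H"
    unfolding H_def mem_horizontal_circle using great_circle_add_pi[of p V 0]
    by (metis great_circle_pi_half, metis add_0 great_circle_0)
  moreover have "(W, z0) \<notin> H"
    using orthonormal_not_on_great_circle[OF pW VW] unfolding H_def mem_horizontal_circle by blast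
  moreover have "(- p, z0) \<noteq> (V, z0)" "(- p, z0) \<noteq> antipode (V, z0)"
    using orthonormal_pair_inner[OF pV] by (auto simp: antipode_def)
  moreover have "horizontal_geod H" unfolding H_def using horizontal_geod_iff pV by blast
  moreover have "snd (W, z0) = snd (V, z0)" "snd (- p, z0) = snd (V, z0)" "snd (p, r) \<noteq> snd (p, s)"
    using assms(2) by simp_all
  ultimately show ?thesis
    unfolding joined_over_distinct_circles_def using geod
    by (intro conjI exI[of _ G1] exI[of _ G2] exI[of _ G3] exI[of _ "(V, z0)"] exI[of _ "(W, z0)"]
        exI[of _ "(- p, z0)"] exI[of _ H]) assumption+
qed

section \<open>Geodesic-preserving bijections\<close>

locale geodesic_preserving_bij =
  fixes f :: "pt \<Rightarrow> pt"
  assumes bij: "bij_betw f S2R S2R" and preserving: "geodesic_preserving f"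
begin

lemma image_geodesic: "geodesic_S2R G \<Longrightarrow> geodesic_S2R (f ` G)"
  using preserving unfolding geodesic_preserving_def by blast

lemma mem_S2R: "x \<in> S2R \<Longrightarrow> f x \<in> S2R"
  using bij by (rule bij_betw_apply)

lemma eq_iff: "x \<in> S2R \<Longrightarrow> y \<in> S2R \<Longrightarrow> f x = f y \<longleftrightarrow> x = y"
  using bij bij_betw_imp_inj_on inj_on_eq_iff by metis

lemma image_Int: "A \<subseteq> S2R \<Longrightarrow> B \<subseteq> S2R \<Longrightarrow> f ` (A \<inter> B) = f ` A \<inter> f ` B"
  using bij bij_betw_imp_inj_on inj_on_image_Int by metis

lemma mem_image_iff: "A \<subseteq> S2R \<Longrightarrow> x \<in> S2R \<Longrightarrow> f x \<in> f ` A \<longleftrightarrow> x \<in> A"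
  using bij bij_betw_imp_inj_on inj_on_image_mem_iff by metis

lemma image_eq_iff: "A \<subseteq> S2R \<Longrightarrow> B \<subseteq> S2R \<Longrightarrow> f ` A = f ` B \<longleftrightarrow> A = B"
  using bij bij_betw_imp_inj_on inj_on_image_eq_iff by metis

text \<open>A horizontal great circle and a perpendicular one meet exactly in an antipodal pair at one
  level, whereas two non-horizontal geodesics meeting at two levels meet at a third one.\<close>
lemma horizontal_image:
  assumes "horizontal_geod H"
  shows "horizontal_geod (f ` H)"
proof (rule ccontr)
  assume nh: "\<not> horizontal_geod (f ` H)"
  obtain U V r where o: "orthonormal_pair U V" and H: "H = horizontal_circle U V r"
    using assms horizontal_geod_iff by blast
  obtain H' where H': "horizontal_geod H'" and meet: "H \<inter> H' = {(U, r), antipode (U, r)}"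
    using horizontal_geod_partner[OF o] H by blast
  have g: "geodesic_S2R H" "geodesic_S2R H'" using assms H' unfolding horizontal_geod_def by simp_all
  then have sub: "H \<subseteq> S2R" "H' \<subseteq> S2R" by (simp_all add: geodesic_subset_S2R)
  have "(U, r) \<in> H" "antipode (U, r) \<in> H" using meet by auto
  then have a: "(U, r) \<in> S2R" "antipode (U, r) \<in> S2R" using sub(1) by auto
  have fmeet: "f ` H \<inter> f ` H' = {f (U, r), f (antipode (U, r))}"
    using image_Int[OF sub] meet by simp
  then have mem: "f (U, r) \<in> f ` H \<inter> f ` H'" "f (antipode (U, r)) \<in> f ` H \<inter> f ` H'" by simp_all
  have "f (U, r) \<noteq> f (antipode (U, r))" using eq_iff[OF a] antipode_neq[OF a(1)] by simp
  then have levels: "snd (f (U, r)) \<noteq> snd (f (antipode (U, r)))"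
    using nonhorizontal_geod_level_inj[OF image_geodesic[OF g(1)] nh] mem by blast
  then have nh': "\<not> horizontal_geod (f ` H')" using horizontal_geod_level mem by blast
  obtain y where "y \<in> f ` H \<inter> f ` H'" and "snd y = 2 * snd (f (antipode (U, r))) - snd (f (U, r))"
    using nonhorizontal_geods_third_common_point[OF image_geodesic[OF g(1)] nh
        image_geodesic[OF g(2)] nh' mem] by blast
  with fmeet levels show False by auto
qed

lemma same_level_image:
  assumes "x \<in> S2R" "y \<in> S2R" "snd x = snd y"
  shows "snd (f x) = snd (f y)"
proof -
  obtain H where "horizontal_geod H" "x \<in> H" "y \<in> H" using horizontal_geod_through[OF assms] .
  then show ?thesis using horizontal_geod_level[OF horizontal_image] by blast
qed

lemma nonhorizontal_image:
  assumes G: "geodesic_S2R G" and nh: "\<not> horizontal_geod G"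
  shows "\<not> horizontal_geod (f ` G)"
proof
  assume "horizontal_geod (f ` G)"
  then obtain c where c: "f ` G \<subseteq> UNIV \<times> {c}" unfolding horizontal_geod_def by blast
  obtain g where "g \<in> G" using nonhorizontal_geod_meets_level[OF G nh] by metis
  then have "(fst g, c + 1) \<in> S2R" using geodesic_subset_S2R[OF G] unfolding S2R_def by auto
  then obtain x where x: "x \<in> S2R" "f x = (fst g, c + 1)" using bij unfolding bij_betw_def by force
  obtain y where y: "y \<in> G" "snd y = snd x" using nonhorizontal_geod_meets_level[OF G nh] by metis
  then have "snd (f y) = snd (f x)"
    using same_level_image x(1) geodesic_subset_S2R[OF G] by blast
  moreover have "snd (f y) = c" using c y(1) by auto
  ultimately show False using x(2) by simp
qed

lemma distinct_level_image:
  assumes x: "x \<in> S2R" and y: "y \<in> S2R" and "snd x \<noteq> snd y"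
  shows "snd (f x) \<noteq> snd (f y)"
proof
  assume eq: "snd (f x) = snd (f y)"
  define L where "L = {fst x} \<times> (UNIV :: real set)"
  define y' where "y' = (fst x, snd y)"
  have unit: "norm (fst x) = 1" using x unfolding S2R_def by (auto simp: case_prod_beta)
  then have L: "geodesic_S2R L" unfolding L_def by (rule vertical_line_geodesic)
  have xy': "x \<in> L" "y' \<in> L" "y' \<in> S2R"
    using unit unfolding L_def y'_def S2R_def by (auto simp: mem_Times_iff)
  have "\<not> horizontal_geod L"
  proof
    assume "horizontal_geod L"
    then have "snd x = snd y'" using horizontal_geod_level xy'(1,2) by blast
    then show False using assms(3) by (simp add: y'_def)
  qed
  then have "\<not> horizontal_geod (f ` L)" by (rule nonhorizontal_image[OF L])
  moreover have "f x \<in> f ` L" "f y' \<in> f ` L" using xy'(1,2) by simp_all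
  moreover have "snd (f x) = snd (f y')" using eq same_level_image[OF xy'(3) y] by (simp add: y'_def)
  ultimately have "f x = f y'" by (rule nonhorizontal_geod_level_inj[OF image_geodesic[OF L]])
  then have "x = y'" using eq_iff[OF x xy'(3)] by simp
  then have "snd x = snd y" unfolding y'_def by (metis snd_conv)
  with assms(3) show False ..
qed

lemma antipode_image:
  assumes x: "x \<in> S2R"
  shows "f (antipode x) = antipode (f x)"
proof -
  have unit: "norm (fst x) = 1" using x unfolding S2R_def by (auto simp: case_prod_beta)
  obtain V where o: "orthonormal_pair (fst x) V" using orthonormal_pair_exists[OF _ unit] by auto
  define H where "H = horizontal_circle (fst x) V (snd x)"
  obtain H' where H': "horizontal_geod H'" and meet: "H \<inter> H' = {x, antipode x}"
    using horizontal_geod_partner[OF o, of "snd x"] unfolding H_def by auto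
  have H: "horizontal_geod H" unfolding H_def using o horizontal_geod_iff by blast
  have sub: "H \<subseteq> S2R" "H' \<subseteq> S2R"
    using H H' geodesic_subset_S2R unfolding horizontal_geod_def by blast+
  have "f x \<in> f ` H" "f x \<in> f ` H'" using meet by blast+
  then have "antipode (f x) \<in> f ` H \<inter> f ` H'"
    using antipode_mem_horizontal_geod horizontal_image H H' by blast
  also have "\<dots> = {f x, f (antipode x)}" using image_Int[OF sub] meet by simp
  finally show ?thesis using antipode_neq[OF mem_S2R[OF x]] by auto
qed

lemma slant_image_not_vertical:
  assumes "slant_geod S"
  shows "\<not> vertical_geod (f ` S)"
proof
  assume "vertical_geod (f ` S)"
  then obtain q where q: "f ` S = {q} \<times> UNIV" unfolding vertical_geod_def by blast
  obtain G a b where G: "geodesic_S2R G" "G \<noteq> S" and ab: "a \<in> S \<inter> G" "b \<in> S \<inter> G" "a \<noteq> b"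
    and no_antipode: "\<And>y. y \<in> G \<Longrightarrow> antipode y \<notin> S"
    using slant_geod_companion[OF assms] by blast
  have "geodesic_S2R S" using assms unfolding slant_geod_def by blast
  then have sub: "S \<subseteq> S2R" "G \<subseteq> S2R" using G(1) by (simp_all add: geodesic_subset_S2R)
  have fa: "f a = (q, snd (f a))" and fb: "f b = (q, snd (f b))"
    using q ab(1,2) by (auto simp: prod_eq_iff mem_Times_iff)
  have mem: "f a \<in> f ` G" "f b \<in> f ` G" using ab by auto
  have "a \<in> S2R" "b \<in> S2R" using ab sub by auto
  then have "f a \<noteq> f b" using eq_iff ab(3) by simp
  have "\<not> horizontal_geod (f ` G)"
  proof
    assume "horizontal_geod (f ` G)"
    then have "snd (f a) = snd (f b)" using horizontal_geod_level mem by blast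
    then show False using fa fb \<open>f a \<noteq> f b\<close> by simp
  qed
  moreover have "(q, snd (f a)) \<in> f ` G" using mem(1) fa by simp
  ultimately have "f ` G = {q} \<times> UNIV \<or> (\<exists>z'. (- q, z') \<in> f ` G)"
    by (rule nonhorizontal_geod_through_point[OF image_geodesic[OF G(1)]])
  then show False
  proof
    assume "f ` G = {q} \<times> UNIV"
    then show False using q G(2) image_eq_iff[OF sub(2,1)] by simp
  next
    assume "\<exists>z'. (- q, z') \<in> f ` G"
    then obtain g z' where g: "g \<in> G" "f g = (- q, z')" by (metis imageE)
    then have "f (antipode g) = (q, z')" using antipode_image sub by (auto simp: antipode_def)
    then have "f (antipode g) \<in> f ` S" using q by simp
    then have "antipode g \<in> S" using mem_image_iff[OF sub(1) antipode_in_S2R] g(1) sub(2) by blast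
    with no_antipode[OF g(1)] show False by contradiction
  qed
qed

lemma joined_over_distinct_circles_image:
  assumes x: "x \<in> S2R" and y: "y \<in> S2R" and "joined_over_distinct_circles x y"
  shows "joined_over_distinct_circles (f x) (f y)"
proof -
  obtain G1 G2 G3 a1 a2 a3 H where levels: "snd x \<noteq> snd y"
    and G: "geodesic_S2R G1" "geodesic_S2R G2" "geodesic_S2R G3" "{x, y} \<subseteq> G1 \<inter> G2 \<inter> G3"
    and a: "a1 \<in> G1" "a2 \<in> G2" "a3 \<in> G3" "snd a2 = snd a1" "snd a3 = snd a1"
      "a3 \<noteq> a1" "a3 \<noteq> antipode a1"
    and H: "horizontal_geod H" "a1 \<in> H" "a3 \<in> H" "a2 \<notin> H"
    using assms(3) unfolding joined_over_distinct_circles_def by (elim conjE exE) (rule that)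
  have "G1 \<subseteq> S2R" "G2 \<subseteq> S2R" "G3 \<subseteq> S2R" using G(1-3) by (simp_all add: geodesic_subset_S2R)
  then have aS: "a1 \<in> S2R" "a2 \<in> S2R" "a3 \<in> S2R" using a(1-3) by auto
  have HS: "H \<subseteq> S2R" using H(1) geodesic_subset_S2R unfolding horizontal_geod_def by simp
  have "snd (f x) \<noteq> snd (f y)" by (rule distinct_level_image[OF x y levels])
  moreover have "geodesic_S2R (f ` G1)" "geodesic_S2R (f ` G2)" "geodesic_S2R (f ` G3)"
    using G(1-3) by (simp_all add: image_geodesic)
  moreover have "{f x, f y} \<subseteq> f ` G1 \<inter> f ` G2 \<inter> f ` G3" using G(4) by auto
  moreover have "f a1 \<in> f ` G1" "f a2 \<in> f ` G2" "f a3 \<in> f ` G3" using a(1-3) by simp_all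
  moreover have "snd (f a2) = snd (f a1)" "snd (f a3) = snd (f a1)"
    using same_level_image[OF aS(2,1) a(4)] same_level_image[OF aS(3,1) a(5)] .
  moreover have "f a3 \<noteq> f a1" using eq_iff[OF aS(3,1)] a(6) by simp
  moreover have "f a3 \<noteq> antipode (f a1)"
    using eq_iff[OF aS(3) antipode_in_S2R[OF aS(1)]] antipode_image[OF aS(1)] a(7) by simp
  moreover have "horizontal_geod (f ` H)" "f a1 \<in> f ` H" "f a3 \<in> f ` H" "f a2 \<notin> f ` H"
    using horizontal_image[OF H(1)] H(2-4) mem_image_iff[OF HS aS(2)] by simp_all
  ultimately show ?thesis
    unfolding joined_over_distinct_circles_def
    by (intro conjI exI[of _ "f ` G1"] exI[of _ "f ` G2"] exI[of _ "f ` G3"] exI[of _ "f a1"]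
        exI[of _ "f a2"] exI[of _ "f a3"] exI[of _ "f ` H"]) assumption+
qed

text \<open>Points of a vertical line are pairwise joined over distinct circles, so their images are
  pairwise equal or antipodal in the sphere factor.\<close>
lemma vertical_image:
  assumes "vertical_geod G"
  shows "vertical_geod (f ` G)"
proof -
  obtain P where G_geod: "geodesic_S2R G" and P: "norm P = 1" and G: "G = {P} \<times> UNIV"
    using assms unfolding vertical_geod_def by blast
  have "\<not> horizontal_geod G"
  proof
    assume "horizontal_geod G"
    then have "snd (P, 0::real) = snd (P, 1::real)" using horizontal_geod_level G by blast
    then show False by simp
  qed
  then have nh: "\<not> horizontal_geod (f ` G)" by (rule nonhorizontal_image[OF G_geod])
  have x0: "(P, 0) \<in> S2R" using P by (simp add: S2R_def)
  have "fst g = fst (f (P, 0)) \<or> fst g = - fst (f (P, 0))" if g_mem: "g \<in> f ` G" for g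
  proof -
    obtain s where g: "g = f (P, s)" using g_mem G by auto
    have y: "(P, s) \<in> S2R" using P by (simp add: S2R_def)
    show ?thesis
    proof (cases "s = 0")
      case False
      then have "joined_over_distinct_circles (P, 0) (P, s)"
        by (intro vertical_pair_joined_over_distinct_circles P) simp
      then have "joined_over_distinct_circles (f (P, 0)) (f (P, s))"
        by (rule joined_over_distinct_circles_image[OF x0 y])
      then show ?thesis using g joined_over_distinct_circles_imp_aligned by blast
    qed (use g in simp)
  qed
  then show ?thesis by (rule nonhorizontal_geod_in_antipodal_lines[OF image_geodesic[OF G_geod] nh])
qed

end

theorem lemma4p10:
  fixes f :: "pt \<Rightarrow> pt"
  assumes "bij_betw f S2R S2R"
    and "geodesic_preserving f"
  shows "\<forall>G. (horizontal_geod G \<longrightarrow> horizontal_geod (f ` G))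
           \<and> (vertical_geod G \<longrightarrow> vertical_geod (f ` G))
           \<and> (slant_geod G \<longrightarrow> slant_geod (f ` G))"
proof -
  interpret geodesic_preserving_bij f using assms by unfold_locales
  show ?thesis
  proof (intro allI conjI impI)
    fix G
    show "horizontal_geod G \<Longrightarrow> horizontal_geod (f ` G)" by (rule horizontal_image)
    show "vertical_geod G \<Longrightarrow> vertical_geod (f ` G)" by (rule vertical_image)
    assume S: "slant_geod G"
    then have "geodesic_S2R G" "\<not> horizontal_geod G" unfolding slant_geod_def by simp_all
    then show "slant_geod (f ` G)"
      unfolding slant_geod_def
      using image_geodesic nonhorizontal_image slant_image_not_vertical[OF S] by simp
  qed
qed

end
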